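(* Let $q$ be a prime power, $m\ge 1$, $1\le k\le n$, let $g_1,\dots,g_n\in\mathbb{F}_{q^m}$ be linearly independent over $\mathbb{F}_q$, let $\mathbf g=(g_1,\dots,g_n)$, let $C$ be the Gabidulin code defined below, and let $\mathbf r\in\mathbb{F}_{q^m}^n$ be a received word. Then Algorithm 1 (described in the context), run on $k,n,\mathbf g,\mathbf r$, returns a list whose elements are exactly the message polynomials $m(x)$ ($m\in\mathcal{L}_q(x,q^m)$, $\mathrm{qdeg}(m)<k$) of all codewords $\mathbf c=(m(g_1),\dots,m(g_n))\in C$ that are closest to $\mathbf r$ in the rank distance, i.e. with $d_R(\mathbf c,\mathbf r)=\min_{\mathbf c'\in C}d_R(\mathbf c',\mathbf r)$.
   Context: Write $[i]:=q^i$. A $q$-linearized polynomial over $\mathbb{F}_{q^m}$ is $f(x)=\sum_{i=0}^{d}a_ix^{[i]}$ with $a_i\in\mathbb{F}_{q^m}$; if $a_d\ne0$ then $d=\mathrm{qdeg}(f)$ is its $q$-degree ($\mathrm{qdeg}(0)=-\infty$), and $f$ is monic if $a_d=1$. The set $\mathcal{L}_q(x,q^m)$ of such polynomials is a (noncommutative) ring under addition and composition $f\circ g=f(g(x))$. For $\mathbb{F}_q$-linearly independent $g_1,\dots,g_n$, $\Pi_{\mathbf g}(x)=\prod_{u\in\langle g_1,\dots,g_n\rangle}(x-u)$ ($\mathbb{F}_q$-linear span) is the $q$-annihilator polynomial; it lies in $\mathcal{L}_q(x,q^m)$ and has $q$-degree $n$. For $\mathbf r=(r_1,\dots,r_n)$,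 the $q$-Lagrange polynomial is $\Lambda_{\mathbf g,\mathbf r}(x)=\sum_{i=1}^n(-1)^{n-i}r_i\det(\mathfrak D_i(\mathbf g,x))/\det(M_n(g_1,\dots,g_n))$, where $M_n(v_1,\dots,v_s)$ is the $n\times s$ matrix with $(j,l)$ entry $v_l^{[j-1]}$ and $\mathfrak D_i(\mathbf g,x)$ is $M_n(g_1,\dots,g_n,x)$ with the $i$-th column removed; it lies in $\mathcal{L}_q(x,q^m)$, has $q$-degree less than $n$ and satisfies $\Lambda_{\mathbf g,\mathbf r}(g_i)=r_i$. The Gabidulin code is $C=\{(m(g_1),\dots,m(g_n)) : m\in\mathcal{L}_q(x,q^m),\ \mathrm{qdeg}(m)<k\}$, $m$ being the message polynomial of the codeword. The rank distance $d_R(\mathbf a,\mathbf b)$ of $\mathbf a,\mathbf b\in\mathbb{F}_{q^m}^n$ is the $\mathbb{F}_q$-rank of the $m\times n$ matrix over $\mathbb{F}_q$ obtained by expanding each coordinate of $\mathbf a-\mathbf b$ in a fixed $\mathbb{F}_q$-basis of $\mathbb{F}_{q^m}$. $\mathcal{L}_q(x,q^m)^2$ is a left module via $h\circ[f_1\ f_2]=[h\circ f_1\ \ h\circ f_2]$. The interpolation module $\mathfrak M(\mathbf r)$ is the set of all $\beta\circ[\Pi_{\mathbf g}(x)\ \ 0]+\gamma\circ[-\Lambda_{\mathbf g,\mathbf r}(x)\ \ x]$ with $\beta,\gamma\in\mathcal{L}_q(x,q^m)$. Monomials are $x^{[i]}e_j$ ($x^{[i]}$ in coordinate $j\in\{1,2\}$).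 The $(0,k-1)$-weighted term-over-position order: with $w_1=0,w_2=k-1$, $x^{[i_1]}e_{j_1}<x^{[i_2]}e_{j_2}$ iff $i_1+w_{j_1}<i_2+w_{j_2}$, or $i_1+w_{j_1}=i_2+w_{j_2}$ and $j_1<j_2$. The leading monomial $\mathrm{lm}(f)$ of a nonzero $f$ is its largest monomial (with nonzero coefficient), the leading term $\mathrm{lt}(f)$ is that monomial with its coefficient, and the leading position $\mathrm{lpos}(f)$ is its coordinate $j$. The weighted $q$-degree of $[f_1\ f_2]$ is $\max\{\mathrm{qdeg}(f_1),\mathrm{qdeg}(f_2)+k-1\}$. A basis of a submodule is a generating set whose elements are linearly independent ($\sum a_i\circ f^{(i)}=0$ with $a_i\in\mathcal{L}_q(x,q^m)$ implies all $a_i=0$). For nonzero $f^{(1)},\dots,f^{(s)}$, $f$ reduces modulo $F=\{f^{(1)},\dots,f^{(s)}\}$ in one step if $h=f-\sum_{i}(b_ix^{[a_i]})\circ f^{(i)}$ (sum over some of the $f^{(i)}$) with $\mathrm{lm}(f)=x^{[a_i]}\circ\mathrm{lm}(f^{(i)})$ for each such $i$ and $\mathrm{lt}(f)=\sum_i(b_ix^{[a_i]})\circ\mathrm{lt}(f^{(i)})$; $f$ is minimal w.r.t. $F$ if it cannot be so reduced. A basis $B$ is minimal if each $b\in B$ is minimal w.r.t. $B\setminus\{b\}$. Algorithm 1 (input $k,n,\mathbf g,\mathbf r$): (1) compute $\Pi_{\mathbf g},\Lambda_{\mathbf g,\mathbf r}$ and form $\mathfrak M(\mathbf r)$; (2)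 compute a minimal basis $\{b^{(1)},b^{(2)}\}$ of $\mathfrak M(\mathbf r)$ w.r.t. the $(0,k-1)$-weighted term-over-position order with $\mathrm{lpos}(b^{(1)})=1$, $\mathrm{lpos}(b^{(2)})=2$; (3) let $\ell_1,\ell_2$ be the weighted $q$-degrees of $b^{(1)},b^{(2)}$; (4) set list $:=$ empty, $j:=0$; while list is empty: for every $\beta\in\mathcal{L}_q(x,q^m)$ with $\mathrm{qdeg}(\beta)\le\ell_2-\ell_1+j$ and every monic $\gamma\in\mathcal{L}_q(x,q^m)$ with $\mathrm{qdeg}(\gamma)=j$, put $f=[f_1\ f_2]:=\beta\circ b^{(1)}+\gamma\circ b^{(2)}$, and if there is $m\in\mathcal{L}_q(x,q^m)$ with $f_1(x)=-f_2(m(x))$, add $m$ to the list; then $j:=j+1$. Return the list. *)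

theory Defs
  imports "HOL-Computational_Algebra.Polynomial" "HOL-Computational_Algebra.Primes"
    "Jordan_Normal_Form.Determinant" "HOL-Library.Cardinality"
begin

definition Fq :: "nat \<Rightarrow> 'a::field set" where
  "Fq q = {x. x ^ q = x}"

definition Fq_lin_indep :: "nat \<Rightarrow> (nat \<Rightarrow> 'a::field) \<Rightarrow> nat set \<Rightarrow> bool" where
  "Fq_lin_indep q v I =
     (\<forall>c. (\<forall>i\<in>I. c i \<in> Fq q) \<and> (\<Sum>i\<in>I. c i * v i) = 0 \<longrightarrow> (\<forall>i\<in>I. c i = 0))"

definition Fq_span :: "nat \<Rightarrow> (nat \<Rightarrow> 'a::field) \<Rightarrow> nat \<Rightarrow> 'a set" where
  "Fq_span q g n = {\<Sum>i<n. c i * g i | c. \<forall>i<n. c i \<in> Fq q}"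

text \<open>q-linearized polynomials: ordinary polynomials whose monomials are all x^(q^i).
  The ring operation is composition (pcompose).\<close>
definition linpolys :: "nat \<Rightarrow> 'a::comm_ring_1 poly set" where
  "linpolys q = {p. \<forall>i. coeff p i \<noteq> 0 \<longrightarrow> (\<exists>j. i = q ^ j)}"

text \<open>q-degree of a nonzero linearized polynomial (the zero case, -infinity, is treated separately).\<close>
definition qdeg :: "nat \<Rightarrow> 'a::zero poly \<Rightarrow> nat" where
  "qdeg q p = (THE d. degree p = q ^ d)"

definition lcomp :: "'a::comm_ring_1 poly \<Rightarrow> 'a poly \<times> 'a poly \<Rightarrow> 'a poly \<times> 'a poly" where
  "lcomp \<beta> f = (pcompose \<beta> (fst f), pcompose \<beta> (snd f))"

definition padd :: "'a::comm_ring_1 poly \<times> 'a poly \<Rightarrow> 'a poly \<times> 'a poly \<Rightarrow> 'a poly \<times> 'a poly" where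
  "padd f h = (fst f + fst h, snd f + snd h)"

definition ann_poly :: "nat \<Rightarrow> (nat \<Rightarrow> 'a::field) \<Rightarrow> nat \<Rightarrow> 'a poly" where
  "ann_poly q g n = (\<Prod>u\<in>Fq_span q g n. [:-u, 1:])"

text \<open>M_n(v_1,...,v_s): n x s matrix with (j,l) entry v_l^[j-1] (0-based here).\<close>
definition Mmat :: "nat \<Rightarrow> nat \<Rightarrow> 'b::comm_ring_1 list \<Rightarrow> 'b mat" where
  "Mmat q n vs = mat n (length vs) (\<lambda>(j, l). (vs ! l) ^ (q ^ j))"

definition lagrange_poly :: "nat \<Rightarrow> nat \<Rightarrow> (nat \<Rightarrow> 'a::field) \<Rightarrow> (nat \<Rightarrow> 'a) \<Rightarrow> 'a poly" where
  "lagrange_poly q n g r =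
     (\<Sum>i<n. smult ((-1) ^ (n - 1 - i) * r i / det (Mmat q n (map g [0..<n])))
        (det (Mmat q n (let vs = map (\<lambda>l. [:g l:]) [0..<n] @ [[:0, 1:]]
                        in take i vs @ drop (Suc i) vs))))"

definition interp_module :: "nat \<Rightarrow> nat \<Rightarrow> (nat \<Rightarrow> 'a::field) \<Rightarrow> (nat \<Rightarrow> 'a) \<Rightarrow> ('a poly \<times> 'a poly) set" where
  "interp_module q n g r =
     {padd (lcomp \<beta> (ann_poly q g n, 0)) (lcomp \<gamma> (- lagrange_poly q n g r, [:0, 1:])) | \<beta> \<gamma>.
        \<beta> \<in> linpolys q \<and> \<gamma> \<in> linpolys q}"

text \<open>Monomials x^[i] e_j are pairs (i, j), j \<in> {1,2}; (0,k-1)-weighted TOP order.\<close>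
definition mweight :: "nat \<Rightarrow> nat \<Rightarrow> nat" where
  "mweight k j = (if j = 1 then 0 else k - 1)"

definition mon_less :: "nat \<Rightarrow> nat \<times> nat \<Rightarrow> nat \<times> nat \<Rightarrow> bool" where
  "mon_less k \<mu> \<nu> =
     (fst \<mu> + mweight k (snd \<mu>) < fst \<nu> + mweight k (snd \<nu>) \<or>
      (fst \<mu> + mweight k (snd \<mu>) = fst \<nu> + mweight k (snd \<nu>) \<and> snd \<mu> < snd \<nu>))"

definition comp :: "nat \<Rightarrow> 'b \<times> 'b \<Rightarrow> 'b" where
  "comp j f = (if j = 1 then fst f else snd f)"

definition mons :: "nat \<Rightarrow> 'a::zero poly \<times> 'a poly \<Rightarrow> (nat \<times> nat) set" where
  "mons q f = {(i, j). j \<in> {1, 2} \<and> coeff (comp j f) (q ^ i) \<noteq> 0}"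

definition lm :: "nat \<Rightarrow> nat \<Rightarrow> 'a::zero poly \<times> 'a poly \<Rightarrow> nat \<times> nat" where
  "lm q k f = (THE \<mu>. \<mu> \<in> mons q f \<and> (\<forall>\<nu>\<in>mons q f. \<nu> \<noteq> \<mu> \<longrightarrow> mon_less k \<nu> \<mu>))"

definition lpos :: "nat \<Rightarrow> nat \<Rightarrow> 'a::zero poly \<times> 'a poly \<Rightarrow> nat" where
  "lpos q k f = snd (lm q k f)"

definition lc :: "nat \<Rightarrow> nat \<Rightarrow> 'a::zero poly \<times> 'a poly \<Rightarrow> 'a" where
  "lc q k f = coeff (comp (snd (lm q k f)) f) (q ^ fst (lm q k f))"

text \<open>One-step reducibility: (b x^[a]) o (c x^[i] e_j) = b c^(q^a) x^[a+i] e_j.\<close>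
definition reduces_step :: "nat \<Rightarrow> nat \<Rightarrow> ('a::field poly \<times> 'a poly) set \<Rightarrow> 'a poly \<times> 'a poly \<Rightarrow> bool" where
  "reduces_step q k F f =
     (f \<noteq> (0, 0) \<and>
      (\<exists>S a b. finite S \<and> S \<subseteq> F \<and>
         (\<forall>h\<in>S. h \<noteq> (0, 0) \<and> lm q k f = (a h + fst (lm q k h), snd (lm q k h))) \<and>
         lc q k f = (\<Sum>h\<in>S. b h * lc q k h ^ (q ^ a h))))"

definition lcomb :: "('a::comm_ring_1 poly \<times> 'a poly) set \<Rightarrow> ('a poly \<times> 'a poly \<Rightarrow> 'a poly) \<Rightarrow> 'a poly \<times> 'a poly" where
  "lcomb B a = ((\<Sum>h\<in>B. fst (lcomp (a h) h)), (\<Sum>h\<in>B. snd (lcomp (a h) h)))"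

definition is_basis :: "nat \<Rightarrow> ('a::comm_ring_1 poly \<times> 'a poly) set \<Rightarrow> ('a poly \<times> 'a poly) set \<Rightarrow> bool" where
  "is_basis q M B =
     (finite B \<and> B \<subseteq> M \<and>
      M = {lcomb B a | a. \<forall>h\<in>B. a h \<in> linpolys q} \<and>
      (\<forall>a. (\<forall>h\<in>B. a h \<in> linpolys q) \<and> lcomb B a = (0, 0) \<longrightarrow> (\<forall>h\<in>B. a h = 0)))"

definition minimal_basis :: "nat \<Rightarrow> nat \<Rightarrow> ('a::field poly \<times> 'a poly) set \<Rightarrow> ('a poly \<times> 'a poly) set \<Rightarrow> bool" where
  "minimal_basis q k M B = (is_basis q M B \<and> (\<forall>b\<in>B. \<not> reduces_step q k (B - {b}) b))"

text \<open>weighted q-degree max(qdeg f1, qdeg f2 + k - 1), with qdeg 0 = -infinity.\<close>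
definition wqdeg :: "nat \<Rightarrow> nat \<Rightarrow> 'a::zero poly \<times> 'a poly \<Rightarrow> int" where
  "wqdeg q k f =
     (if fst f = 0 then int (qdeg q (snd f)) + int k - 1
      else if snd f = 0 then int (qdeg q (fst f))
      else max (int (qdeg q (fst f))) (int (qdeg q (snd f)) + int k - 1))"

text \<open>Messages added to the list in iteration j of step (4) of Algorithm 1.\<close>
definition alg_candidates :: "nat \<Rightarrow> nat \<Rightarrow> 'a::field poly \<times> 'a poly \<Rightarrow> 'a poly \<times> 'a poly \<Rightarrow> nat \<Rightarrow> 'a poly set" where
  "alg_candidates q k b1 b2 j =
     {mp. mp \<in> linpolys q \<and>
        (\<exists>\<beta> \<gamma>. \<beta> \<in> linpolys q \<and> (\<beta> = 0 \<or> int (qdeg q \<beta>) \<le> wqdeg q k b2 - wqdeg q k b1 + int j) \<and>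
           \<gamma> \<in> linpolys q \<and> \<gamma> \<noteq> 0 \<and> lead_coeff \<gamma> = 1 \<and> qdeg q \<gamma> = j \<and>
           (let f = padd (lcomp \<beta> b1) (lcomp \<gamma> b2) in fst f = - pcompose (snd f) mp))}"

definition algorithm1_output :: "nat \<Rightarrow> nat \<Rightarrow> 'a::field poly \<times> 'a poly \<Rightarrow> 'a poly \<times> 'a poly \<Rightarrow> 'a poly set" where
  "algorithm1_output q k b1 b2 =
     alg_candidates q k b1 b2 (LEAST j. alg_candidates q k b1 b2 j \<noteq> {})"

text \<open>Rank distance: F_q-rank of the expanded m x n matrix = maximal number of
  F_q-linearly independent columns (coordinates of a - b).\<close>
definition rank_dist :: "nat \<Rightarrow> nat \<Rightarrow> (nat \<Rightarrow> 'a::field) \<Rightarrow> (nat \<Rightarrow> 'a) \<Rightarrow> nat" where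
  "rank_dist q n a b = Max {card I | I. I \<subseteq> {..<n} \<and> Fq_lin_indep q (\<lambda>i. a i - b i) I}"

definition gabidulin_msgs :: "nat \<Rightarrow> nat \<Rightarrow> 'a::comm_ring_1 poly set" where
  "gabidulin_msgs q k = {mp \<in> linpolys q. mp = 0 \<or> qdeg q mp < k}"

definition codeword :: "(nat \<Rightarrow> 'a::comm_ring_1) \<Rightarrow> 'a poly \<Rightarrow> nat \<Rightarrow> 'a" where
  "codeword g mp = (\<lambda>i. poly mp (g i))"

end

theory Submission
  imports Defs
begin

text \<open>An element \<open>(f\<^sub>1, f\<^sub>2)\<close> of the interpolation module satisfies \<open>f\<^sub>1 = P \<circ> \<Pi> - f\<^sub>2 \<circ> \<Lambda>\<close>, so
  if \<open>f\<^sub>1 = - f\<^sub>2 \<circ> m\<close>, then \<open>f\<^sub>2\<close> vanishes on the error values \<open>m(g\<^sub>i) - r\<^sub>i\<close>; as the roots of a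
  linearized polynomial form an \<open>\<bbbF>\<^sub>q\<close>-space, the rank distance of the codeword of \<open>m\<close> is at most
  the \<open>q\<close>-degree of \<open>f\<^sub>2\<close>. Conversely, if the error of \<open>m\<close> has rank \<open>t\<close>, the annihilator \<open>E\<close> of its
  \<open>\<bbbF>\<^sub>q\<close>-span has \<open>q\<close>-degree \<open>t\<close> and \<open>(-E \<circ> m, E)\<close> lies in the module.
  Since \<open>b\<^sub>1\<close> and \<open>b\<^sub>2\<close> have distinct leading positions, the leading terms of \<open>\<beta> \<circ> b\<^sub>1 + \<gamma> \<circ> b\<^sub>2\<close>
  cannot cancel. Hence the candidates found in iteration \<open>j\<close> have distance at most
  \<open>qdeg (snd b\<^sub>2) + j\<close>, and every message of distance \<open>t\<close> is found in iteration \<open>t - qdeg (snd b\<^sub>2)\<close>.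
  So the first successful iteration is the one belonging to the minimum distance, and it finds
  exactly the closest messages.\<close>

section \<open>Finite fields\<close>

lemma of_nat_CARD_eq_0: "of_nat CARD('a::{ring_1,finite}) = (0::'a)"
proof -
  have "(\<Sum>x\<in>(UNIV::'a set). x + 1) = (\<Sum>x\<in>UNIV. x)"
    by (rule sum.reindex_bij_witness[of _ "\<lambda>x. x - 1" "\<lambda>x. x + 1"]) auto
  hence "(\<Sum>x\<in>(UNIV::'a set). x) + of_nat CARD('a) = (\<Sum>x\<in>UNIV. x)"
    by (simp add: sum.distrib)
  thus ?thesis by simp
qed

lemma CHAR_eq_prime_of_CARD:
  assumes "prime p" and "CARD('a::{field,finite}) = p ^ k"
  shows "CHAR('a) = p"
proof -
  have prime: "prime CHAR('a)"
    by (rule prime_CHAR_semidom, rule finite_imp_CHAR_pos) simp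
  have "CHAR('a) dvd p ^ k"
    using of_nat_CARD_eq_0[where 'a='a] assms(2) of_nat_eq_0_iff_char_dvd by metis
  hence "CHAR('a) dvd p" using prime prime_dvd_power by blast
  thus ?thesis using prime assms(1) primes_dvd_imp_eq by blast
qed

lemma power_CARD_eq: "(x::'a::{field,finite}) ^ CARD('a) = x"
proof (cases "x = 0")
  case False
  have "x * (\<Prod>y\<in>UNIV-{0}. x * y) = x * x ^ (CARD('a) - 1) * \<Prod>(UNIV-{0::'a})"
    by (simp add: prod.distrib mult_ac)
  also have "x * x ^ (CARD('a) - 1) = x ^ CARD('a)"
    using finite_UNIV_card_ge_0[where 'a='a] by (simp flip: power_Suc)
  also have "(\<Prod>y\<in>UNIV-{0}. x * y) = (\<Prod>y\<in>UNIV-{0::'a}. y)"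
    by (rule prod.reindex_bij_witness[of _ "\<lambda>y. y / x" "\<lambda>y. x * y"]) (use False in auto)
  finally show ?thesis
    by simp
qed (use finite_UNIV_card_ge_0[where 'a='a] in auto)

locale Fq_extension =
  fixes q e m :: nat and field_type :: "'a::{field,finite} itself"
  assumes q_eq: "q = CHAR('a) ^ e" and e_pos: "0 < e" and m_pos: "0 < m"
    and CARD_eq: "CARD('a) = q ^ m"
begin

lemma prime_CHAR: "prime CHAR('a)"
  by (rule prime_CHAR_semidom, rule finite_imp_CHAR_pos) simp

lemma q_ge_2: "2 \<le> q"
proof -
  have char: "2 \<le> CHAR('a)" using prime_CHAR prime_ge_2_nat by blast
  also have "\<dots> = CHAR('a) ^ 1" by simp
  also have "\<dots> \<le> CHAR('a) ^ e" using e_pos char by (intro power_increasing) auto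
  finally show ?thesis by (simp add: q_eq)
qed

lemma q_pow_inject: "q ^ i = q ^ j \<longleftrightarrow> i = j"
  using q_ge_2 by (intro power_inject_exp) auto

lemma q_pow_le_iff: "q ^ i \<le> q ^ j \<longleftrightarrow> i \<le> j"
  using q_ge_2 by (intro power_increasing_iff) auto

lemma q_pow_less_iff: "q ^ i < q ^ j \<longleftrightarrow> i < j"
  using q_ge_2 by (intro power_strict_increasing_iff) auto

lemma q_pow_pos: "0 < q ^ i"
  using q_ge_2 by simp

lemma less_q_pow: "i < q ^ i"
proof -
  have "i < 2 ^ i" by (rule less_exp)
  also have "\<dots> \<le> q ^ i" using q_ge_2 by (intro power_mono) auto
  finally show ?thesis .
qed

text \<open>Stated for every ring of characteristic \<open>CHAR('a)\<close>, to be used both in \<open>'a\<close> and in \<open>'a poly\<close>.\<close>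

lemma frob_add: "CHAR('b::comm_ring_1) = CHAR('a) \<Longrightarrow> ((x::'b) + y) ^ (q ^ i) = x ^ (q ^ i) + y ^ (q ^ i)"
  by (rule freshmans_dream'[of _ "e * i"]) (simp_all add: q_eq power_mult prime_CHAR)

lemma frob_sum: "CHAR('b::comm_ring_1) = CHAR('a) \<Longrightarrow> (sum (f::'c \<Rightarrow> 'b) A) ^ (q ^ i) = (\<Sum>x\<in>A. f x ^ (q ^ i))"
  by (rule freshmans_dream_sum'[of _ "e * i"]) (simp_all add: q_eq power_mult prime_CHAR)

lemma frob_uminus: "CHAR('b::comm_ring_1) = CHAR('a) \<Longrightarrow> (- (x::'b)) ^ (q ^ i) = - (x ^ (q ^ i))"
proof -
  assume char: "CHAR('b) = CHAR('a)"
  have "(- x) ^ (q ^ i) + x ^ (q ^ i) = (- x + x) ^ (q ^ i)" by (rule frob_add[OF char, symmetric])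
  also have "\<dots> = 0" by (simp add: zero_power[OF q_pow_pos])
  finally show ?thesis by (simp add: eq_neg_iff_add_eq_0)
qed

lemma frob_diff: "CHAR('b::comm_ring_1) = CHAR('a) \<Longrightarrow> ((x::'b) - y) ^ (q ^ i) = x ^ (q ^ i) - y ^ (q ^ i)"
  using frob_add[of x "-y" i] frob_uminus[of y i] by simp

lemma power_q_pow_m: "(x::'a) ^ (q ^ m) = x"
  using power_CARD_eq[of x] CARD_eq by simp

lemma Fq_power: "c \<in> Fq q \<Longrightarrow> (c::'a) ^ (q ^ i) = c"
proof (induction i)
  case (Suc i)
  have "c ^ (q ^ Suc i) = (c ^ (q ^ i)) ^ q" by (simp add: mult.commute flip: power_mult)
  thus ?case using Suc by (simp add: Fq_def)
qed simp

lemma Fq_0 [simp]: "(0::'a) \<in> Fq q"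
  using q_ge_2 by (simp add: Fq_def)

lemma Fq_1 [simp]: "(1::'a) \<in> Fq q"
  by (simp add: Fq_def)

lemma Fq_uminus: "a \<in> Fq q \<Longrightarrow> - (a::'a) \<in> Fq q"
  using frob_uminus[of a 1] by (simp add: Fq_def)

lemma Fq_diff: "a \<in> Fq q \<Longrightarrow> b \<in> Fq q \<Longrightarrow> (a::'a) - b \<in> Fq q"
  using frob_diff[of a b 1] by (simp add: Fq_def)

lemma Fq_divide: "a \<in> Fq q \<Longrightarrow> b \<in> Fq q \<Longrightarrow> (a::'a) / b \<in> Fq q"
  by (simp add: Fq_def power_divide)

definition Xq_minus_X :: "'a poly" where
  "Xq_minus_X = monom 1 q - monom 1 1"

lemma degree_Xq_minus_X: "degree Xq_minus_X = q"
proof (rule antisym)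
  show "degree Xq_minus_X \<le> q"
    unfolding Xq_minus_X_def using q_ge_2
    by (intro order.trans[OF degree_diff_le_max]) (auto simp: degree_monom_eq)
  show "q \<le> degree Xq_minus_X"
    unfolding Xq_minus_X_def using q_ge_2 by (intro le_degree) simp
qed

lemma Xq_minus_X_nonzero: "Xq_minus_X \<noteq> 0"
  using degree_Xq_minus_X q_ge_2 by auto

lemma Fq_eq_roots: "Fq q = {x. poly Xq_minus_X x = 0}"
  by (auto simp: Fq_def Xq_minus_X_def poly_monom)

text \<open>The sum \<open>\<Sum>i<m. (X^q - X)^(q^i)\<close> telescopes to \<open>X^(q^m) - X\<close>, which splits over \<open>'a\<close>.\<close>

lemma Xq_minus_X_dvd: "Xq_minus_X dvd (monom 1 (q ^ m) - monom 1 1 :: 'a poly)"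
proof -
  have "(\<Sum>i<m. monom (1::'a) (q ^ Suc i) - monom 1 (q ^ i)) = monom 1 (q ^ m) - monom 1 (q ^ 0)"
    by (rule sum_lessThan_telescope)
  moreover have "Xq_minus_X ^ (q ^ i) = monom (1::'a) (q ^ Suc i) - monom 1 (q ^ i)" for i
    unfolding Xq_minus_X_def by (simp add: frob_diff monom_power mult.commute)
  ultimately have eq: "monom 1 (q ^ m) - monom 1 1 = (\<Sum>i<m. Xq_minus_X ^ (q ^ i))" by simp
  show ?thesis unfolding eq using q_pow_pos by (intro dvd_sum dvd_power) auto
qed

lemma card_Fq: "card (Fq q :: 'a set) = q"
proof (rule antisym)
  show "card (Fq q :: 'a set) \<le> q"
    unfolding Fq_eq_roots using card_poly_roots_bound[OF Xq_minus_X_nonzero] degree_Xq_minus_X by simp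
next
  define P where "P = (monom 1 (q ^ m) - monom 1 1 :: 'a poly)"
  obtain H where H: "P = Xq_minus_X * H" using Xq_minus_X_dvd unfolding P_def by (auto elim: dvdE)
  have qm: "1 < q ^ m" using q_ge_2 m_pos by (intro one_less_power) auto
  have degP: "degree P = q ^ m"
  proof (rule antisym)
    show "degree P \<le> q ^ m"
      unfolding P_def using qm by (intro order.trans[OF degree_diff_le_max]) (auto simp: degree_monom_eq)
    show "q ^ m \<le> degree P"
      unfolding P_def using qm by (intro le_degree) simp
  qed
  hence "H \<noteq> 0" using H qm by (metis degree_0 mult_zero_right not_one_less_zero)
  hence degH: "degree H = q ^ m - q"
    using H degP degree_mult_eq[OF Xq_minus_X_nonzero] degree_Xq_minus_X by simp
  have "UNIV = {x. poly Xq_minus_X x = 0} \<union> {x::'a. poly H x = 0}"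
    using H power_q_pow_m by (auto simp: P_def poly_monom fun_eq_iff dest: arg_cong[of _ _ "\<lambda>p. poly p _"])
  hence "q ^ m \<le> card {x. poly Xq_minus_X x = 0} + card {x::'a. poly H x = 0}"
    by (metis CARD_eq card_Un_le)
  also have "\<dots> \<le> card (Fq q :: 'a set) + (q ^ m - q)"
    using card_poly_roots_bound[OF \<open>H \<noteq> 0\<close>] degH Fq_eq_roots by simp
  finally show "q \<le> card (Fq q :: 'a set)"
    using q_pow_le_iff[of 1 m] m_pos by simp
qed

end

section \<open>Linearized polynomials\<close>

lemma pcompose_X_left: "[:0, 1:] \<circ>\<^sub>p r = (r::'a::comm_ring_1 poly)"
  by (simp add: pcompose_pCons)

lemma pcompose_monom: "monom c n \<circ>\<^sub>p r = smult c (r ^ n :: 'a::comm_ring_1 poly)"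
  by (induction n) (simp_all add: monom_0 monom_Suc pcompose_pCons)

context Fq_extension
begin

definition linpoly :: "(nat \<Rightarrow> 'a) \<Rightarrow> nat \<Rightarrow> 'a poly" where
  "linpoly a N = (\<Sum>j<N. monom (a j) (q ^ j))"

lemma linpolys_0 [simp]: "0 \<in> linpolys q"
  by (simp add: linpolys_def)

lemma linpolys_add: "p \<in> linpolys q \<Longrightarrow> r \<in> linpolys q \<Longrightarrow> p + r \<in> linpolys q"
  unfolding linpolys_def mem_Collect_eq by (metis add.right_neutral add_0 coeff_add)

lemma linpolys_uminus: "p \<in> linpolys q \<Longrightarrow> - p \<in> linpolys q"
  unfolding linpolys_def by simp

lemma linpolys_diff: "p \<in> linpolys q \<Longrightarrow> r \<in> linpolys q \<Longrightarrow> p - r \<in> linpolys q"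
  using linpolys_add[of p "- r"] linpolys_uminus[of r] by simp

lemma linpolys_smult: "p \<in> linpolys q \<Longrightarrow> smult c p \<in> linpolys q"
  unfolding linpolys_def mem_Collect_eq by (metis coeff_smult mult_zero_right)

lemma linpolys_monom: "monom c (q ^ j) \<in> linpolys q"
  by (auto simp: linpolys_def coeff_monom)

lemma linpolys_sum: "(\<And>x. x \<in> A \<Longrightarrow> f x \<in> linpolys q) \<Longrightarrow> sum f A \<in> linpolys q"
  by (induction A rule: infinite_finite_induct) (auto intro: linpolys_add)

lemma linpolys_X: "[:0, 1:] \<in> linpolys q"
  by (auto simp: linpolys_def coeff_pCons split: nat.splits intro: exI[of _ 0])

lemma linpolys_linpoly: "linpoly a N \<in> linpolys q"
  unfolding linpoly_def by (intro linpolys_sum linpolys_monom)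

lemma coeff_linpoly_q_pow: "coeff (linpoly a N) (q ^ j) = (if j < N then a j else 0)"
proof -
  have "coeff (linpoly a N) (q ^ j) = (\<Sum>i<N. if i = j then a i else 0)"
    unfolding linpoly_def coeff_sum coeff_monom by (intro sum.cong) (auto simp: q_pow_inject)
  thus ?thesis by simp
qed

lemma linpoly_coeffs: "p \<in> linpolys q \<Longrightarrow> p = linpoly (\<lambda>j. coeff p (q ^ j)) (Suc (degree p))"
proof (rule poly_eqI)
  fix i assume p: "p \<in> linpolys q"
  show "coeff p i = coeff (linpoly (\<lambda>j. coeff p (q ^ j)) (Suc (degree p))) i"
  proof (cases "\<exists>j. i = q ^ j")
    case True
    then obtain j where i: "i = q ^ j" by blast
    have "degree p < q ^ j" if "\<not> j < Suc (degree p)" using that less_q_pow[of j] by simp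
    thus ?thesis unfolding i coeff_linpoly_q_pow by (auto simp: coeff_eq_0)
  next
    case False
    hence "coeff p i = 0" using p unfolding linpolys_def by blast
    moreover have "coeff (linpoly (\<lambda>j. coeff p (q ^ j)) (Suc (degree p))) i = 0"
      using False linpolys_linpoly unfolding linpolys_def by blast
    ultimately show ?thesis by simp
  qed
qed

lemma linpolysD: "p \<in> linpolys q \<Longrightarrow> \<exists>a N. p = linpoly a N"
  using linpoly_coeffs by blast

lemma poly_linpoly: "poly (linpoly a N) x = (\<Sum>j<N. a j * x ^ (q ^ j))"
  by (simp add: linpoly_def poly_sum poly_monom)

lemma pcompose_linpoly: "linpoly a N \<circ>\<^sub>p r = (\<Sum>j<N. smult (a j) (r ^ (q ^ j)))"
  by (simp add: linpoly_def pcompose_sum pcompose_monom)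

lemma poly_linpolys_add: "(p::'a poly) \<in> linpolys q \<Longrightarrow> poly p (x + y) = poly p x + poly p y"
  by (auto dest!: linpolysD simp: poly_linpoly frob_add distrib_left sum.distrib)

lemma poly_linpolys_0: "(p::'a poly) \<in> linpolys q \<Longrightarrow> poly p 0 = 0"
  by (auto dest!: linpolysD simp: poly_linpoly zero_power[OF q_pow_pos])

lemma poly_linpolys_uminus: "(p::'a poly) \<in> linpolys q \<Longrightarrow> poly p (- x) = - poly p x"
  by (auto dest!: linpolysD simp: poly_linpoly frob_uminus sum_negf)

lemma poly_linpolys_diff: "(p::'a poly) \<in> linpolys q \<Longrightarrow> poly p (x - y) = poly p x - poly p y"
  using poly_linpolys_add[of p x "- y"] poly_linpolys_uminus[of p y] by simp

lemma poly_linpolys_Fq_mult: "(p::'a poly) \<in> linpolys q \<Longrightarrow> c \<in> Fq q \<Longrightarrow> poly p (c * x) = c * poly p x"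
  by (auto dest!: linpolysD simp: poly_linpoly power_mult_distrib Fq_power sum_distrib_left mult_ac)

lemma poly_linpolys_Fq_lincomb:
  assumes "(p::'a poly) \<in> linpolys q" and "\<And>i. i \<in> A \<Longrightarrow> c i \<in> Fq q"
  shows "poly p (\<Sum>i\<in>A. c i * v i) = (\<Sum>i\<in>A. c i * poly p (v i))"
  using assms
  by (induction A rule: infinite_finite_induct)
     (auto simp: poly_linpolys_0 poly_linpolys_add poly_linpolys_Fq_mult)

lemma pcompose_linpolys_add: "(p::'a poly) \<in> linpolys q \<Longrightarrow> p \<circ>\<^sub>p (r + s) = p \<circ>\<^sub>p r + p \<circ>\<^sub>p s"
  by (auto dest!: linpolysD simp: pcompose_linpoly frob_add sum.distrib smult_add_right)

lemma pcompose_linpolys_0: "(p::'a poly) \<in> linpolys q \<Longrightarrow> p \<circ>\<^sub>p 0 = 0"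
  by (simp add: pcompose_0' poly_linpolys_0 flip: poly_0_coeff_0)

lemma pcompose_linpolys_uminus: "(p::'a poly) \<in> linpolys q \<Longrightarrow> p \<circ>\<^sub>p (- r) = - (p \<circ>\<^sub>p r)"
  using pcompose_linpolys_add[of p r "- r"] pcompose_linpolys_0[of p] by (simp add: add_eq_0_iff)

lemma pcompose_linpolys_diff: "(p::'a poly) \<in> linpolys q \<Longrightarrow> p \<circ>\<^sub>p (r - s) = p \<circ>\<^sub>p r - p \<circ>\<^sub>p s"
  using pcompose_linpolys_add[of p r "- s"] pcompose_linpolys_uminus[of p s] by simp

lemma linpolys_power: "(r::'a poly) \<in> linpolys q \<Longrightarrow> r ^ (q ^ j) \<in> linpolys q"
proof -
  assume "r \<in> linpolys q"
  then obtain b M where r: "r = linpoly b M" using linpolysD by blast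
  have "r ^ (q ^ j) = (\<Sum>l<M. monom (b l ^ (q ^ j)) (q ^ (l + j)))"
    unfolding r linpoly_def by (simp add: frob_sum monom_power power_add)
  thus ?thesis by (simp add: linpolys_sum linpolys_monom)
qed

lemma linpolys_pcompose: "(p::'a poly) \<in> linpolys q \<Longrightarrow> r \<in> linpolys q \<Longrightarrow> p \<circ>\<^sub>p r \<in> linpolys q"
  using linpolys_power[of r]
  by (auto dest!: linpolysD[of p] simp: pcompose_linpoly intro!: linpolys_sum linpolys_smult)

lemma qdeg_eqI: "degree (p::'a poly) = q ^ d \<Longrightarrow> qdeg q p = d"
  unfolding qdeg_def by (rule the_equality) (auto simp: q_pow_inject)

lemma degree_linpolys: "(p::'a poly) \<in> linpolys q \<Longrightarrow> p \<noteq> 0 \<Longrightarrow> degree p = q ^ qdeg q p"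
proof -
  assume "p \<in> linpolys q" "p \<noteq> 0"
  moreover from this have "coeff p (degree p) \<noteq> 0" by simp
  ultimately obtain j where "degree p = q ^ j" unfolding linpolys_def by blast
  thus ?thesis using qdeg_eqI by simp
qed

lemma coeff_qdeg_nonzero: "(p::'a poly) \<in> linpolys q \<Longrightarrow> p \<noteq> 0 \<Longrightarrow> coeff p (q ^ qdeg q p) \<noteq> 0"
  using degree_linpolys[of p] by (metis leading_coeff_0_iff)

lemma le_qdeg: "(p::'a poly) \<in> linpolys q \<Longrightarrow> coeff p (q ^ i) \<noteq> 0 \<Longrightarrow> i \<le> qdeg q p"
proof -
  assume "p \<in> linpolys q" "coeff p (q ^ i) \<noteq> 0"
  moreover from this have "q ^ i \<le> degree p" "p \<noteq> 0" by (auto intro: le_degree)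
  ultimately show ?thesis using degree_linpolys q_pow_le_iff by simp
qed

lemma qdeg_uminus [simp]: "qdeg q (- p) = qdeg q (p::'a poly)"
  by (simp add: qdeg_def)

lemma qdeg_smult [simp]: "c \<noteq> 0 \<Longrightarrow> qdeg q (smult c p) = qdeg q (p::'a poly)"
  by (simp add: qdeg_def)

lemma degree_le_q_pow_iff: "(p::'a poly) \<in> linpolys q \<Longrightarrow> degree p \<le> q ^ N \<longleftrightarrow> p = 0 \<or> qdeg q p \<le> N"
  using degree_linpolys[of p] q_pow_le_iff by (cases "p = 0") auto

lemma degree_less_q_pow_iff: "(p::'a poly) \<in> linpolys q \<Longrightarrow> degree p < q ^ N \<longleftrightarrow> p = 0 \<or> qdeg q p < N"
  using degree_linpolys[of p] q_pow_less_iff q_pow_pos by (cases "p = 0") auto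

lemma degree_pcompose_linpolys:
  "(p::'a poly) \<in> linpolys q \<Longrightarrow> r \<in> linpolys q \<Longrightarrow> p \<noteq> 0 \<Longrightarrow> r \<noteq> 0 \<Longrightarrow> degree (p \<circ>\<^sub>p r) = q ^ (qdeg q p + qdeg q r)"
  by (simp add: degree_pcompose degree_linpolys power_add)

lemma pcompose_linpolys_nonzero:
  "(p::'a poly) \<in> linpolys q \<Longrightarrow> r \<in> linpolys q \<Longrightarrow> p \<noteq> 0 \<Longrightarrow> r \<noteq> 0 \<Longrightarrow> p \<circ>\<^sub>p r \<noteq> 0"
  using degree_pcompose_linpolys[of p r] q_pow_pos by fastforce

lemma qdeg_pcompose:
  "(p::'a poly) \<in> linpolys q \<Longrightarrow> r \<in> linpolys q \<Longrightarrow> p \<noteq> 0 \<Longrightarrow> r \<noteq> 0 \<Longrightarrow> qdeg q (p \<circ>\<^sub>p r) = qdeg q p + qdeg q r"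
  by (rule qdeg_eqI) (rule degree_pcompose_linpolys)

lemma degree_pcompose_le_q_pow:
  assumes "(p::'a poly) \<in> linpolys q" "r \<in> linpolys q" "p \<noteq> 0 \<Longrightarrow> r \<noteq> 0 \<Longrightarrow> qdeg q p + qdeg q r \<le> N"
  shows "degree (p \<circ>\<^sub>p r) \<le> q ^ N"
  using assms degree_pcompose_linpolys[of p r] q_pow_le_iff
  by (cases "p = 0 \<or> r = 0") (auto simp: degree_pcompose)

lemma degree_pcompose_less_q_pow:
  assumes "(p::'a poly) \<in> linpolys q" "r \<in> linpolys q" "p \<noteq> 0 \<Longrightarrow> r \<noteq> 0 \<Longrightarrow> qdeg q p + qdeg q r < N"
  shows "degree (p \<circ>\<^sub>p r) < q ^ N"
  using assms degree_pcompose_linpolys[of p r] q_pow_less_iff q_pow_pos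
  by (cases "p = 0 \<or> r = 0") (auto simp: degree_pcompose)

end

section \<open>Subspaces and annihilator polynomials\<close>

context Fq_extension
begin

lemma mem_Fq_span_iff: "x \<in> Fq_span q g n \<longleftrightarrow> (\<exists>c. (\<forall>i<n. c i \<in> Fq q) \<and> x = (\<Sum>i<n. c i * g i))"
  by (auto simp: Fq_span_def)

lemma Fq_lin_indep_subset:
  assumes "Fq_lin_indep q (v::nat \<Rightarrow> 'a) J" "I \<subseteq> J" "finite J"
  shows "Fq_lin_indep q v I"
  unfolding Fq_lin_indep_def
proof (intro allI impI)
  fix c assume c: "(\<forall>i\<in>I. c i \<in> Fq q) \<and> (\<Sum>i\<in>I. c i * v i) = 0"
  define c' where "c' = (\<lambda>i. if i \<in> I then c i else 0)"
  have "(\<Sum>i\<in>J. c' i * v i) = (\<Sum>i\<in>J. if i \<in> I then c i * v i else 0)"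
    unfolding c'_def by (intro sum.cong) auto
  also have "\<dots> = (\<Sum>i\<in>I. c i * v i)"
    using assms(2,3) by (simp add: sum.inter_restrict[symmetric] Int_absorb1)
  finally have "(\<Sum>i\<in>J. c' i * v i) = 0" using c by simp
  moreover have "\<forall>i\<in>J. c' i \<in> Fq q" using c by (simp add: c'_def)
  ultimately have "\<forall>i\<in>J. c' i = 0" using assms(1) unfolding Fq_lin_indep_def by blast
  thus "\<forall>i\<in>I. c i = 0" using assms(2) unfolding c'_def by (metis subsetD)
qed

lemma Fq_span_0: "(0::'a) \<in> Fq_span q g n"
  unfolding mem_Fq_span_iff by (intro exI[of _ "\<lambda>_. 0"]) simp

lemma Fq_span_generator: "i < n \<Longrightarrow> (g i :: 'a) \<in> Fq_span q g n"
proof -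
  assume "i < n"
  have "(\<Sum>j<n. (if j = i then 1 else 0) * g j) = (\<Sum>j<n. if j = i then g j else 0)"
    by (intro sum.cong) auto
  also have "\<dots> = g i" using \<open>i < n\<close> by simp
  finally show ?thesis
    unfolding mem_Fq_span_iff by (intro exI[of _ "\<lambda>j. if j = i then 1 else 0"]) auto
qed

lemma Fq_span_Suc:
  "Fq_span q (g::nat \<Rightarrow> 'a) (Suc n) = (\<lambda>(u, c). u + c * g n) ` (Fq_span q g n \<times> Fq q)"
proof (intro equalityI subsetI)
  fix x assume "x \<in> Fq_span q g (Suc n)"
  then obtain c where c: "\<forall>i<Suc n. c i \<in> Fq q" "x = (\<Sum>i<Suc n. c i * g i)"
    unfolding mem_Fq_span_iff by blast
  have "(\<Sum>i<n. c i * g i) \<in> Fq_span q g n"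
    unfolding mem_Fq_span_iff by (rule exI[of _ c]) (use c(1) in auto)
  thus "x \<in> (\<lambda>(u, c). u + c * g n) ` (Fq_span q g n \<times> Fq q)"
    using c by (intro image_eqI[of _ _ "(\<Sum>i<n. c i * g i, c n)"]) auto
next
  fix x assume "x \<in> (\<lambda>(u, c). u + c * g n) ` (Fq_span q g n \<times> Fq q)"
  then obtain u c0 where u: "u \<in> Fq_span q g n" "c0 \<in> Fq q" "x = u + c0 * g n" by auto
  then obtain c where c: "\<forall>i<n. c i \<in> Fq q" "u = (\<Sum>i<n. c i * g i)"
    unfolding mem_Fq_span_iff by blast
  have "(\<Sum>i<n. (c(n := c0)) i * g i) = (\<Sum>i<n. c i * g i)" by (intro sum.cong) auto
  hence "x = (\<Sum>i<Suc n. (c(n := c0)) i * g i)" using u c by simp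
  thus "x \<in> Fq_span q g (Suc n)"
    unfolding mem_Fq_span_iff using c(1) u(2) by (intro exI[of _ "c(n := c0)"]) (auto simp: less_Suc_eq)
qed

lemma Fq_span_Suc_unique:
  assumes ind: "Fq_lin_indep q (g::nat \<Rightarrow> 'a) {..<Suc n}"
    and "u \<in> Fq_span q g n" "u' \<in> Fq_span q g n" "c \<in> Fq q" "c' \<in> Fq q"
    and eq: "u + c * g n = u' + c' * g n"
  shows "u = u' \<and> c = c'"
proof -
  obtain a a' where a: "\<forall>i<n. a i \<in> Fq q" "u = (\<Sum>i<n. a i * g i)"
    and a': "\<forall>i<n. a' i \<in> Fq q" "u' = (\<Sum>i<n. a' i * g i)"
    using assms(2,3) unfolding mem_Fq_span_iff by blast
  define d where "d = (\<lambda>i. if i < n then a i - a' i else c - c')"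
  have "(\<Sum>i<Suc n. d i * g i) = (u + c * g n) - (u' + c' * g n)"
    unfolding a(2) a'(2) d_def by (simp add: sum_subtractf algebra_simps)
  hence "(\<Sum>i<Suc n. d i * g i) = 0" using eq by simp
  moreover have "\<forall>i\<in>{..<Suc n}. d i \<in> Fq q" using a a' assms(4,5) by (auto simp: d_def intro: Fq_diff)
  ultimately have "d n = 0" using ind unfolding Fq_lin_indep_def by blast
  thus ?thesis using eq by (simp add: d_def)
qed

lemma card_Fq_span: "Fq_lin_indep q (g::nat \<Rightarrow> 'a) {..<n} \<Longrightarrow> card (Fq_span q g n) = q ^ n"
proof (induction n)
  case 0 thus ?case by (simp add: Fq_span_def)
next
  case (Suc n)
  have "Fq_lin_indep q g {..<n}" using Fq_lin_indep_subset[OF Suc.prems] by auto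
  moreover have "inj_on (\<lambda>(u, c). u + c * g n) (Fq_span q g n \<times> Fq q)"
    using Fq_span_Suc_unique[OF Suc.prems] by (auto simp: inj_on_def)
  ultimately show ?case
    using Suc.IH card_Fq by (simp add: Fq_span_Suc card_image card_cartesian_product)
qed

text \<open>The roots of a linearized polynomial form an \<open>\<bbbF>\<^sub>q\<close>-space, so vanishing at \<open>t\<close> independent
  points means having at least \<open>q\<^sup>t\<close> roots.\<close>

lemma indep_roots_le_qdeg:
  assumes p: "(p::'a poly) \<in> linpolys q" "p \<noteq> 0" and ind: "Fq_lin_indep q g {..<t}"
    and van: "\<And>i. i < t \<Longrightarrow> poly p (g i) = 0"
  shows "t \<le> qdeg q p"
proof -
  have sub: "Fq_span q g t \<subseteq> {x. poly p x = 0}"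
  proof
    fix x assume "x \<in> Fq_span q g t"
    then obtain c where c: "\<forall>i<t. c i \<in> Fq q" "x = (\<Sum>i<t. c i * g i)"
      unfolding mem_Fq_span_iff by blast
    have "poly p x = (\<Sum>i<t. c i * poly p (g i))"
      unfolding c(2) by (rule poly_linpolys_Fq_lincomb[OF p(1)]) (use c(1) in auto)
    thus "x \<in> {x. poly p x = 0}" using van by simp
  qed
  hence "q ^ t \<le> card {x. poly p x = 0}"
    using card_mono[OF _ sub] card_Fq_span[OF ind] by simp
  also have "\<dots> \<le> q ^ qdeg q p"
    using card_poly_roots_bound[OF p(2)] degree_linpolys[OF p] by simp
  finally show ?thesis using q_pow_le_iff by simp
qed

lemma prod_Fq_linear_factors: "(\<Prod>c\<in>Fq q. [:-c, 1:]) = (Xq_minus_X :: 'a poly)"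
proof (rule ccontr)
  define Q where "Q = (\<Prod>c\<in>Fq q. [:-c, (1::'a):])"
  define D where "D = Xq_minus_X - Q"
  assume "(\<Prod>c\<in>Fq q. [:-c, 1:]) \<noteq> Xq_minus_X"
  hence "D \<noteq> 0" by (simp add: D_def Q_def)
  have deg: "degree Q = q"
    unfolding Q_def by (subst degree_prod_sum_eq) (auto simp: card_Fq)
  have lead: "lead_coeff Q = 1"
    unfolding Q_def by (simp add: lead_coeff_prod)
  have "degree D \<le> q"
    unfolding D_def using deg degree_Xq_minus_X by (intro order.trans[OF degree_diff_le_max]) simp
  moreover have "coeff D q = 0"
    using deg lead q_ge_2 by (simp add: D_def Xq_minus_X_def)
  ultimately have "degree D < q"
    using \<open>D \<noteq> 0\<close> by (metis le_neq_implies_less leading_coeff_0_iff)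
  have "Fq q \<subseteq> {x. poly D x = 0}"
    using Fq_eq_roots by (auto simp: D_def Q_def poly_prod)
  hence "card (Fq q :: 'a set) \<le> card {x. poly D x = 0}"
    by (intro card_mono) simp_all
  also have "\<dots> \<le> degree D"
    by (rule card_poly_roots_bound[OF \<open>D \<noteq> 0\<close>])
  finally show False using \<open>degree D < q\<close> card_Fq by simp
qed

lemma prod_Fq_shift:
  assumes "(a::'a) \<noteq> 0"
  shows "(\<Prod>c\<in>Fq q. Y - [:c * a:]) = Y ^ q - smult (a ^ q / a) Y"
proof -
  define Z where "Z = smult (inverse a) Y"
  have "Z ^ q - Z = Xq_minus_X \<circ>\<^sub>p Z"
    by (simp add: Xq_minus_X_def pcompose_diff pcompose_monom)
  also have "\<dots> = (\<Prod>c\<in>Fq q. Z - [:c:])"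
    unfolding prod_Fq_linear_factors[symmetric] pcompose_prod by (intro prod.cong) (auto simp: pcompose_pCons)
  also have "\<dots> = (\<Prod>c\<in>Fq q. smult (inverse a) (Y - [:c * a:]))"
    unfolding Z_def using assms by (intro prod.cong) (auto simp: smult_diff_right)
  also have "\<dots> = smult (inverse a ^ q) (\<Prod>c\<in>Fq q. Y - [:c * a:])"
    by (simp add: prod_smult card_Fq)
  finally have "smult (a ^ q) (smult (inverse a ^ q) (\<Prod>c\<in>Fq q. Y - [:c * a:])) = smult (a ^ q) (Z ^ q - Z)"
    by simp
  thus ?thesis using assms unfolding Z_def
    by (simp add: smult_diff_right power_inverse field_simps smult_power)
qed

lemma poly_ann_poly_eq_0_iff: "poly (ann_poly q (g::nat \<Rightarrow> 'a) n) x = 0 \<longleftrightarrow> x \<in> Fq_span q g n"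
  by (simp add: ann_poly_def poly_prod)

lemma degree_ann_poly: "Fq_lin_indep q (g::nat \<Rightarrow> 'a) {..<n} \<Longrightarrow> degree (ann_poly q g n) = q ^ n"
  unfolding ann_poly_def by (subst degree_prod_sum_eq) (auto simp: card_Fq_span)

lemma lead_coeff_ann_poly: "lead_coeff (ann_poly q (g::nat \<Rightarrow> 'a) n) = 1"
  by (simp add: ann_poly_def lead_coeff_prod)

lemma ann_poly_nonzero: "ann_poly q (g::nat \<Rightarrow> 'a) n \<noteq> 0"
  using lead_coeff_ann_poly[of g n] by auto

lemma qdeg_ann_poly: "Fq_lin_indep q (g::nat \<Rightarrow> 'a) {..<n} \<Longrightarrow> qdeg q (ann_poly q g n) = n"
  by (rule qdeg_eqI) (rule degree_ann_poly)

text \<open>Adjoining \<open>g\<^sub>n\<close> to the span: \<open>\<Pi>\<^sub>n\<^sub>+\<^sub>1 = \<Pi>\<^sub>n\<^sup>q - (a\<^sup>q / a) \<Pi>\<^sub>n\<close> with \<open>a = \<Pi>\<^sub>n(g\<^sub>n)\<close>,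
  as \<open>\<Pi>\<^sub>n(x - c g\<^sub>n) = \<Pi>\<^sub>n(x) - c a\<close> for \<open>c \<in> \<bbbF>\<^sub>q\<close>.\<close>

lemma ann_poly_Suc:
  assumes ind: "Fq_lin_indep q (g::nat \<Rightarrow> 'a) {..<Suc n}"
    and lin: "ann_poly q g n \<in> linpolys q"
  defines "a \<equiv> poly (ann_poly q g n) (g n)"
  shows "a \<noteq> 0" and "ann_poly q g (Suc n) = ann_poly q g n ^ q - smult (a ^ q / a) (ann_poly q g n)"
proof -
  define S where "S = Fq_span q g n"
  define P where "P = ann_poly q g n"
  show "a \<noteq> 0"
  proof
    assume "a = 0"
    hence "g n \<in> S" unfolding a_def S_def poly_ann_poly_eq_0_iff .
    thus False
      using Fq_span_Suc_unique[OF ind \<open>g n \<in> S\<close>[unfolded S_def] Fq_span_0, of 0 1] by simp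
  qed
  have inj: "inj_on (\<lambda>(u, c). u + c * g n) (S \<times> Fq q)"
    using Fq_span_Suc_unique[OF ind] unfolding S_def by (auto simp: inj_on_def)
  have shift: "(\<Prod>u\<in>S. [:-(u + c * g n), 1:]) = P - [:c * a:]" if c: "c \<in> Fq q" for c
  proof -
    have "(\<Prod>u\<in>S. [:-(u + c * g n), 1:]) = P \<circ>\<^sub>p [:-(c * g n), 1:]"
      unfolding P_def ann_poly_def S_def pcompose_prod by (intro prod.cong) (auto simp: pcompose_pCons)
    also have "[:-(c * g n), 1:] = [:0, 1:] + [:-(c * g n):]" by simp
    also have "P \<circ>\<^sub>p \<dots> = P + [:poly P (-(c * g n)):]"
      unfolding P_def pcompose_linpolys_add[OF lin] by (simp add: pcompose_X_left pcompose_pCons_0)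
    also have "poly P (-(c * g n)) = - (c * a)"
      using lin c by (simp add: a_def P_def poly_linpolys_uminus poly_linpolys_Fq_mult)
    finally show ?thesis by simp
  qed
  have "ann_poly q g (Suc n) = (\<Prod>(u, c)\<in>S \<times> Fq q. [:-(u + c * g n), 1:])"
    unfolding ann_poly_def Fq_span_Suc S_def[symmetric] by (subst prod.reindex[OF inj]) (simp add: case_prod_beta)
  also have "\<dots> = (\<Prod>u\<in>S. \<Prod>c\<in>Fq q. [:-(u + c * g n), 1:])"
    by (simp add: prod.cartesian_product)
  also have "\<dots> = (\<Prod>c\<in>Fq q. \<Prod>u\<in>S. [:-(u + c * g n), 1:])"
    by (rule prod.swap)
  also have "\<dots> = (\<Prod>c\<in>Fq q. P - [:c * a:])"
    using shift by simp
  also have "\<dots> = P ^ q - smult (a ^ q / a) P"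
    by (rule prod_Fq_shift[OF \<open>a \<noteq> 0\<close>])
  finally show "ann_poly q g (Suc n) = ann_poly q g n ^ q - smult (a ^ q / a) (ann_poly q g n)"
    by (simp add: P_def)
qed

lemma ann_poly_linpolys: "Fq_lin_indep q (g::nat \<Rightarrow> 'a) {..<n} \<Longrightarrow> ann_poly q g n \<in> linpolys q"
proof (induction n)
  case 0 thus ?case by (simp add: ann_poly_def Fq_span_def linpolys_X)
next
  case (Suc n)
  hence "ann_poly q g n \<in> linpolys q" using Fq_lin_indep_subset[OF Suc.prems] by auto
  thus ?case
    using ann_poly_Suc(2)[OF Suc.prems] linpolys_power[of _ 1]
    by (auto intro!: linpolys_diff linpolys_smult)
qed

text \<open>Right division by a monic linearized polynomial, by reducing the leading term with
  \<open>c x\<^sup>[\<^sup>D\<^sup>-\<^sup>n\<^sup>] \<circ> P\<close>.\<close>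

lemma linpolys_right_division:
  assumes P: "(P::'a poly) \<in> linpolys q" "lead_coeff P = 1" "degree P = q ^ n"
    and L: "L \<in> linpolys q"
  shows "\<exists>\<beta> \<rho>. \<beta> \<in> linpolys q \<and> \<rho> \<in> linpolys q \<and> L = \<beta> \<circ>\<^sub>p P + \<rho> \<and> degree \<rho> < q ^ n"
  using L
proof (induction "degree L" arbitrary: L rule: less_induct)
  case less
  show ?case
  proof (cases "degree L < q ^ n")
    case True
    thus ?thesis using less.prems by (intro exI[of _ 0] exI[of _ L]) auto
  next
    case False
    hence "L \<noteq> 0" using q_pow_pos by auto
    define D where "D = qdeg q L"
    have dL: "degree L = q ^ D" using degree_linpolys[OF less.prems \<open>L \<noteq> 0\<close>] D_def by simp
    hence "n \<le> D" using False by (simp add: q_pow_less_iff)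
    define T where "T = monom (lead_coeff L) (q ^ (D - n)) \<circ>\<^sub>p P"
    have "P \<noteq> 0" using P(2) by auto
    have "degree (P ^ (q ^ (D - n))) = q ^ (D - n) * q ^ n"
      by (simp only: degree_power_eq[OF \<open>P \<noteq> 0\<close>] P(3))
    also have "\<dots> = q ^ D" using \<open>n \<le> D\<close> by (simp flip: power_add)
    finally have "degree (P ^ (q ^ (D - n))) = q ^ D" .
    moreover have "lead_coeff (P ^ (q ^ (D - n))) = 1" by (simp only: lead_coeff_power P(2) power_one)
    ultimately have T: "degree T = q ^ D" "coeff T (q ^ D) = lead_coeff L"
      using \<open>L \<noteq> 0\<close> by (simp_all add: T_def pcompose_monom)
    have "degree (L - T) \<le> q ^ D" "coeff (L - T) (q ^ D) = 0"
      using degree_diff_le_max[of L T] T dL by simp_all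
    hence "degree (L - T) < degree L"
      using dL q_pow_pos[of D] by (metis leading_coeff_0_iff le_neq_implies_less degree_0 neq0_conv)
    moreover have "L - T \<in> linpolys q"
      unfolding T_def using less.prems P(1) by (intro linpolys_diff linpolys_pcompose linpolys_monom)
    ultimately obtain \<beta> \<rho> where br: "\<beta> \<in> linpolys q" "\<rho> \<in> linpolys q" "L - T = \<beta> \<circ>\<^sub>p P + \<rho>"
        "degree \<rho> < q ^ n"
      using less.hyps by blast
    have "L = (\<beta> + monom (lead_coeff L) (q ^ (D - n))) \<circ>\<^sub>p P + \<rho>"
      using br(3) unfolding T_def by (simp add: pcompose_add algebra_simps)
    thus ?thesis using br by (blast intro: linpolys_add linpolys_monom)
  qed
qed

lemma ann_poly_right_dvd:
  assumes ind: "Fq_lin_indep q (g::nat \<Rightarrow> 'a) {..<n}"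
    and L: "L \<in> linpolys q" and van: "\<And>i. i < n \<Longrightarrow> poly L (g i) = 0"
  shows "\<exists>\<beta>\<in>linpolys q. L = \<beta> \<circ>\<^sub>p ann_poly q g n"
proof -
  obtain \<beta> \<rho> where br: "\<beta> \<in> linpolys q" "\<rho> \<in> linpolys q" "L = \<beta> \<circ>\<^sub>p ann_poly q g n + \<rho>"
      "degree \<rho> < q ^ n"
    using linpolys_right_division[OF ann_poly_linpolys[OF ind] lead_coeff_ann_poly degree_ann_poly[OF ind] L]
    by blast
  have "poly \<rho> (g i) = 0" if "i < n" for i
    using van[OF that] br(1,3) Fq_span_generator[OF that, of g]
    by (simp add: poly_pcompose poly_linpolys_0 flip: poly_ann_poly_eq_0_iff)
  hence "\<rho> = 0"
    using indep_roots_le_qdeg[OF br(2) _ ind] br(4) degree_less_q_pow_iff[OF br(2)] by fastforce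
  thus ?thesis using br by auto
qed

end

section \<open>Moore matrices and \<open>q\<close>-Lagrange interpolation\<close>

lemma comm_ring_hom_poly_eval: "comm_ring_hom (\<lambda>p. poly p (x::'a::comm_ring_1))"
  by unfold_locales auto

lemma comm_ring_hom_const_poly: "comm_ring_hom (\<lambda>c. [:c::'a::comm_ring_1:])"
  by unfold_locales (auto simp: one_pCons)

lemma Mmat_carrier: "Mmat q n vs \<in> carrier_mat n (length vs)"
  by (simp add: Mmat_def)

lemma Mmat_index: "j < n \<Longrightarrow> l < length vs \<Longrightarrow> Mmat q n vs $$ (j, l) = (vs ! l) ^ (q ^ j)"
  by (simp add: Mmat_def)

lemma hom_det_Mmat:
  assumes "comm_ring_hom h"
  shows "h (det (Mmat q n vs)) = det (Mmat q n (map h vs))"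
proof -
  interpret comm_ring_hom h by fact
  have "map_mat h (Mmat q n vs) = Mmat q n (map h vs)"
    by (rule eq_matI) (auto simp: Mmat_def hom_power)
  thus ?thesis by (simp flip: hom_det)
qed

lemma det_const_entries:
  assumes "\<And>i j. i < dim_row B \<Longrightarrow> j < dim_col B \<Longrightarrow> \<exists>c. B $$ (i, j) = [:c:]"
  shows "\<exists>c. det B = [:c::'a::comm_ring_1:]"
proof -
  have "B = map_mat (\<lambda>c. [:c:]) (map_mat (\<lambda>p. coeff p 0) B)"
    using assms by (intro eq_matI) (auto, metis coeff_pCons_0 pCons_0_0)
  hence "det B = [:det (map_mat (\<lambda>p. coeff p 0) B):]"
    by (metis comm_ring_hom.hom_det[OF comm_ring_hom_const_poly])
  thus ?thesis by blast
qed

lemma det_Mmat_swap: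
  assumes "length (ys @ a # b # zs) = n"
  shows "det (Mmat q n (ys @ a # b # zs)) = - det (Mmat q n (ys @ b # a # zs))"
proof -
  let ?k = "length ys"
  let ?A = "Mmat q n (ys @ a # b # zs)"
  have A: "?A \<in> carrier_mat n n" using Mmat_carrier[of q n "ys @ a # b # zs"] assms by simp
  have "Mmat q n (ys @ b # a # zs) = swapcols ?k (Suc ?k) ?A"
  proof (rule eq_matI)
    fix i j assume "i < dim_row (swapcols ?k (Suc ?k) ?A)" "j < dim_col (swapcols ?k (Suc ?k) ?A)"
    hence i: "i < n" and j: "j < n" using A by auto
    have "(ys @ b # a # zs) ! j = (if ?k = j then (ys @ a # b # zs) ! Suc ?k
       else if Suc ?k = j then (ys @ a # b # zs) ! ?k else (ys @ a # b # zs) ! j)"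
      by (cases "j < ?k"; cases "j = ?k"; cases "j = Suc ?k") (auto simp: nth_append nth_Cons')
    thus "Mmat q n (ys @ b # a # zs) $$ (i, j) = swapcols ?k (Suc ?k) ?A $$ (i, j)"
      using i j assms A by (auto simp: Mmat_index)
  qed (use A assms in \<open>auto simp: Mmat_def\<close>)
  moreover have "det (swapcols ?k (Suc ?k) ?A) = - det ?A"
    using assms A by (intro det_swapcols) auto
  ultimately show ?thesis by simp
qed

lemma det_Mmat_move_last:
  "length (ys @ a # zs) = n \<Longrightarrow>
   det (Mmat q n (ys @ a # zs)) = (-1) ^ length zs * det (Mmat q n (ys @ zs @ [a]))"
proof (induction zs arbitrary: ys)
  case (Cons b zs)
  have "det (Mmat q n (ys @ a # b # zs)) = - det (Mmat q n ((ys @ [b]) @ a # zs))"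
    using det_Mmat_swap[OF Cons.prems] by simp
  also have "\<dots> = - ((-1) ^ length zs * det (Mmat q n ((ys @ [b]) @ zs @ [a])))"
    using Cons.IH[of "ys @ [b]"] Cons.prems by simp
  finally show ?case by simp
qed simp

lemma det_Mmat_eq_columns:
  assumes "length vs = n" "a < n" "b < n" "a \<noteq> b" "vs ! a = vs ! b"
  shows "det (Mmat q n vs) = 0"
proof (rule det_identical_columns[of _ n a b])
  show "Mmat q n vs \<in> carrier_mat n n" using Mmat_carrier[of q n vs] assms by simp
  show "col (Mmat q n vs) a = col (Mmat q n vs) b"
    using assms by (intro eq_vecI) (auto simp: Mmat_def)
qed (use assms in auto)

definition lagrange_cols :: "(nat \<Rightarrow> 'a::comm_ring_1) \<Rightarrow> nat \<Rightarrow> nat \<Rightarrow> 'a poly list" where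
  "lagrange_cols g n i = (let vs = map (\<lambda>l. [:g l:]) [0..<n] @ [[:0, 1:]] in take i vs @ drop (Suc i) vs)"

lemma lagrange_poly_eq:
  "lagrange_poly q n g r =
   (\<Sum>i<n. smult ((-1) ^ (n - 1 - i) * r i / det (Mmat q n (map g [0..<n])))
      (det (Mmat q n (lagrange_cols g n i))))"
  unfolding lagrange_poly_def lagrange_cols_def ..

lemma length_lagrange_cols: "i < n \<Longrightarrow> length (lagrange_cols g n i) = n"
  by (simp add: lagrange_cols_def)

lemma map_poly_lagrange_cols:
  "i < n \<Longrightarrow> map (\<lambda>p. poly p x) (lagrange_cols g n i) =
   take i (map g [0..<n] @ [x]) @ drop (Suc i) (map g [0..<n] @ [x])"
  by (simp add: lagrange_cols_def take_map drop_map)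

lemma lagrange_cols_last: "i < n \<Longrightarrow> lagrange_cols g n i ! (n - 1) = [:0, 1:]"
  by (auto simp: lagrange_cols_def nth_append min_def)

lemma lagrange_cols_const: "i < n \<Longrightarrow> l < n - 1 \<Longrightarrow> \<exists>c. lagrange_cols g n i ! l = [:c:]"
  by (auto simp: lagrange_cols_def nth_append min_def)

context Fq_extension
begin

text \<open>The Moore matrix of independent elements is nonsingular: a kernel vector would give a nonzero
  linearized polynomial of \<open>q\<close>-degree below \<open>n\<close> vanishing at all \<open>g\<^sub>i\<close>.\<close>

lemma det_Moore_nonzero:
  assumes ind: "Fq_lin_indep q (g::nat \<Rightarrow> 'a) {..<n}"
  shows "det (Mmat q n (map g [0..<n])) \<noteq> 0"
proof
  let ?A = "Mmat q n (map g [0..<n])"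
  have A: "?A \<in> carrier_mat n n" using Mmat_carrier[of q n "map g [0..<n]"] by simp
  assume "det ?A = 0"
  hence "det (transpose_mat ?A) = 0" using det_transpose[OF A] by simp
  then obtain w where w: "w \<in> carrier_vec n" "w \<noteq> 0\<^sub>v n" "transpose_mat ?A *\<^sub>v w = 0\<^sub>v n"
    using det_0_iff_vec_prod_zero[of "transpose_mat ?A" n] A by auto
  define p where "p = linpoly (\<lambda>j. w $ j) n"
  have "poly p (g l) = (transpose_mat ?A *\<^sub>v w) $ l" if "l < n" for l
    using that A w(1)
    by (simp add: p_def poly_linpoly scalar_prod_def Mmat_index atLeast0LessThan mult.commute)
  hence van: "poly p (g l) = 0" if "l < n" for l using w(3) that by simp
  obtain j where j: "j < n" "w $ j \<noteq> 0"
    using w(1,2) by (metis eq_vecI index_zero_vec(1) carrier_vecD index_zero_vec(2))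
  hence "p \<noteq> 0" unfolding p_def by (metis coeff_0 coeff_linpoly_q_pow)
  have plin: "p \<in> linpolys q" unfolding p_def by (rule linpolys_linpoly)
  have "n \<le> qdeg q p" using indep_roots_le_qdeg[OF plin \<open>p \<noteq> 0\<close> ind van] .
  moreover have "qdeg q p < n"
    using coeff_qdeg_nonzero[OF plin \<open>p \<noteq> 0\<close>] unfolding p_def coeff_linpoly_q_pow by (auto split: if_splits)
  ultimately show False by simp
qed

text \<open>Expanding \<open>\<frak>D\<^sub>i\<close> along its last column writes it as a combination of the \<open>x\<^sup>[\<^sup>j\<^sup>]\<close>
  with constant cofactors.\<close>

lemma det_lagrange_cols_minor_const:
  assumes i: "i < n" and j: "j < n"
  shows "\<exists>c. det (mat_delete (Mmat q n (lagrange_cols (g::nat \<Rightarrow> 'a) n i)) j (n - 1)) = [:c:]"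
proof (rule det_const_entries)
  let ?A = "Mmat q n (lagrange_cols g n i)"
  fix a b
  assume ab: "a < dim_row (mat_delete ?A j (n - 1))" "b < dim_col (mat_delete ?A j (n - 1))"
  have A: "?A \<in> carrier_mat n n"
    using Mmat_carrier[of q n "lagrange_cols g n i"] by (simp add: length_lagrange_cols[OF i])
  hence a: "a < n - 1" and b: "b < n - 1" using ab by auto
  obtain c where c: "lagrange_cols g n i ! b = [:c:]" using lagrange_cols_const[OF i b] by blast
  have "mat_delete ?A j (n - 1) $$ (a, b) = ?A $$ (if a < j then a else Suc a, b)"
    unfolding mat_delete_def using a b A by auto
  also have "\<dots> = [:c:] ^ (q ^ (if a < j then a else Suc a))"
    using a b i c by (simp add: Mmat_index length_lagrange_cols)
  also have "\<dots> = [:c ^ (q ^ (if a < j then a else Suc a)):]"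
    by (rule poly_const_pow)
  finally show "\<exists>c. mat_delete ?A j (n - 1) $$ (a, b) = [:c:]" by blast
qed

lemma linpolys_minus_one_power_mult: "P \<in> linpolys q \<Longrightarrow> (-1) ^ k * P \<in> linpolys q"
  by (induction k) (auto simp: linpolys_uminus)

lemma det_lagrange_cols_linpolys:
  assumes i: "i < n"
  shows "det (Mmat q n (lagrange_cols (g::nat \<Rightarrow> 'a) n i)) \<in> linpolys q"
proof -
  let ?A = "Mmat q n (lagrange_cols g n i)"
  have A: "?A \<in> carrier_mat n n"
    using Mmat_carrier[of q n "lagrange_cols g n i"] by (simp add: length_lagrange_cols[OF i])
  have "det ?A = (\<Sum>j<n. ?A $$ (j, n - 1) * cofactor ?A j (n - 1))"
    using i by (intro laplace_expansion_column[OF A]) simp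
  also have "\<dots> \<in> linpolys q"
  proof (intro linpolys_sum)
    fix j assume j: "j \<in> {..<n}"
    obtain c where c: "det (mat_delete ?A j (n - 1)) = [:c:]"
      using det_lagrange_cols_minor_const[OF i] j by blast
    have "?A $$ (j, n - 1) = monom 1 (q ^ j)"
      using j i lagrange_cols_last[OF i, of g] by (simp add: Mmat_index length_lagrange_cols monom_altdef)
    hence "?A $$ (j, n - 1) * cofactor ?A j (n - 1) = (-1) ^ (j + (n - 1)) * monom c (q ^ j)"
      unfolding cofactor_def c by (simp add: mult_monom mult_ac flip: monom_0)
    thus "?A $$ (j, n - 1) * cofactor ?A j (n - 1) \<in> linpolys q"
      by (simp add: linpolys_minus_one_power_mult linpolys_monom)
  qed
  finally show ?thesis .
qed

lemma lagrange_poly_linpolys: "lagrange_poly q n (g::nat \<Rightarrow> 'a) r \<in> linpolys q"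
  unfolding lagrange_poly_eq by (intro linpolys_sum linpolys_smult det_lagrange_cols_linpolys) auto

lemma poly_det_lagrange_cols:
  assumes i: "i < n" and l: "l < n"
  shows "poly (det (Mmat q n (lagrange_cols (g::nat \<Rightarrow> 'a) n i))) (g l) =
    (if l = i then (-1) ^ (n - 1 - i) * det (Mmat q n (map g [0..<n])) else 0)"
proof -
  let ?G = "map g [0..<n]"
  let ?E = "take i (?G @ [g l]) @ drop (Suc i) (?G @ [g l])"
  have "poly (det (Mmat q n (lagrange_cols g n i))) (g l) = det (Mmat q n ?E)"
    using hom_det_Mmat[OF comm_ring_hom_poly_eval] map_poly_lagrange_cols[OF i] by metis
  also have "\<dots> = (if l = i then (-1) ^ (n - 1 - i) * det (Mmat q n ?G) else 0)"
  proof (cases "l = i")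
    case True
    have "?G = take i ?G @ ?G ! i # drop (Suc i) ?G" using i by (intro id_take_nth_drop) simp
    hence "det (Mmat q n ?G) = (-1) ^ (n - 1 - i) * det (Mmat q n ?E)"
      using det_Mmat_move_last[of "take i ?G" "?G ! i" "drop (Suc i) ?G" n] i True by simp
    thus ?thesis using True by (simp add: mult.assoc[symmetric] flip: power_add)
  next
    case False
    define p where "p = (if l < i then l else l - 1)"
    have "p < n - 1" "?E ! p = g l" "?E ! (n - 1) = g l"
      using False i l by (auto simp: p_def nth_append min_def)
    hence "det (Mmat q n ?E) = 0" using i by (intro det_Mmat_eq_columns[of _ n p "n - 1"]) auto
    thus ?thesis using False by simp
  qed
  finally show ?thesis .
qed

lemma poly_lagrange_poly:
  assumes ind: "Fq_lin_indep q (g::nat \<Rightarrow> 'a) {..<n}" and l: "l < n"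
  shows "poly (lagrange_poly q n g r) (g l) = r l"
proof -
  let ?M = "det (Mmat q n (map g [0..<n]))"
  have "poly (lagrange_poly q n g r) (g l) =
     (\<Sum>i<n. (-1) ^ (n - 1 - i) * r i / ?M * (if l = i then (-1) ^ (n - 1 - i) * ?M else 0))"
    unfolding lagrange_poly_eq poly_sum poly_smult by (intro sum.cong refl) (simp add: poly_det_lagrange_cols l)
  also have "\<dots> = ((-1) ^ (n - 1 - l)) ^ 2 * r l"
    using l det_Moore_nonzero[OF ind] by (simp add: if_distrib sum.delta power2_eq_square cong: if_cong)
  also have "\<dots> = r l" by (simp flip: power_mult)
  finally show ?thesis .
qed

end

section \<open>Leading monomials\<close>

lemma mon_less_asym: "mon_less k \<mu> \<nu> \<Longrightarrow> \<not> mon_less k \<nu> \<mu>"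
  by (auto simp: mon_less_def)

lemma lm_eqI:
  assumes "\<mu> \<in> mons q f" and "\<And>\<nu>. \<nu> \<in> mons q f \<Longrightarrow> \<nu> \<noteq> \<mu> \<Longrightarrow> mon_less k \<nu> \<mu>"
  shows "lm q k f = \<mu>"
  unfolding lm_def
proof (rule the_equality)
  fix \<mu>' assume \<mu>': "\<mu>' \<in> mons q f \<and> (\<forall>\<nu>\<in>mons q f. \<nu> \<noteq> \<mu>' \<longrightarrow> mon_less k \<nu> \<mu>')"
  show "\<mu>' = \<mu>"
  proof (rule ccontr)
    assume "\<mu>' \<noteq> \<mu>"
    thus False using assms \<mu>' mon_less_asym by metis
  qed
qed (use assms in blast)

context Fq_extension
begin

lemma mons_linpolys:
  assumes "(i, j) \<in> mons q (f1, f2)" "(f1::'a poly) \<in> linpolys q" "f2 \<in> linpolys q"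
  shows "j = 1 \<and> f1 \<noteq> 0 \<and> i \<le> qdeg q f1 \<or> j = 2 \<and> f2 \<noteq> 0 \<and> i \<le> qdeg q f2"
proof -
  have "j = 1 \<and> coeff f1 (q ^ i) \<noteq> 0 \<or> j = 2 \<and> coeff f2 (q ^ i) \<noteq> 0"
    using assms(1) by (auto simp: mons_def comp_def)
  thus ?thesis using le_qdeg[OF assms(2)] le_qdeg[OF assms(3)] by auto
qed

lemma lm_linpolys:
  assumes "(f1::'a poly) \<in> linpolys q" "f2 \<in> linpolys q" "(f1, f2) \<noteq> (0, 0)"
  shows "lm q k (f1, f2) =
    (if f2 \<noteq> 0 \<and> (f1 = 0 \<or> qdeg q f1 \<le> qdeg q f2 + (k - 1)) then (qdeg q f2, 2) else (qdeg q f1, 1))"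
    (is "_ = ?\<mu>")
proof (rule lm_eqI)
  show "?\<mu> \<in> mons q (f1, f2)"
    using assms coeff_qdeg_nonzero[of f1] coeff_qdeg_nonzero[of f2] by (auto simp: mons_def comp_def)
  fix \<nu> assume \<nu>: "\<nu> \<in> mons q (f1, f2)" "\<nu> \<noteq> ?\<mu>"
  obtain i j where ij: "\<nu> = (i, j)" by (cases \<nu>)
  have "j = 1 \<and> f1 \<noteq> 0 \<and> i \<le> qdeg q f1 \<or> j = 2 \<and> f2 \<noteq> 0 \<and> i \<le> qdeg q f2"
    using mons_linpolys[of i j f1 f2] \<nu>(1) assms(1,2) ij by simp
  thus "mon_less k \<nu> ?\<mu>"
    using \<nu>(2) unfolding ij by (auto simp: mon_less_def mweight_def)
qed

lemma lpos_eq_1D: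
  assumes "(f1::'a poly) \<in> linpolys q" "f2 \<in> linpolys q" "(f1, f2) \<noteq> (0, 0)" "lpos q k (f1, f2) = 1"
  shows "f1 \<noteq> 0 \<and> (f2 = 0 \<or> qdeg q f2 + (k - 1) < qdeg q f1)"
  using assms(3,4) unfolding lpos_def lm_linpolys[OF assms(1-3)] by (auto split: if_splits)

lemma lpos_eq_2D:
  assumes "(f1::'a poly) \<in> linpolys q" "f2 \<in> linpolys q" "(f1, f2) \<noteq> (0, 0)" "lpos q k (f1, f2) = 2"
  shows "f2 \<noteq> 0 \<and> (f1 = 0 \<or> qdeg q f1 \<le> qdeg q f2 + (k - 1))"
  using assms(4) unfolding lpos_def lm_linpolys[OF assms(1-3)] by (auto split: if_splits)

end

section \<open>Rank\<close>

definition Fq_rank :: "nat \<Rightarrow> nat \<Rightarrow> (nat \<Rightarrow> 'a::field) \<Rightarrow> nat" where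
  "Fq_rank q n v = Max {card I | I. I \<subseteq> {..<n} \<and> Fq_lin_indep q v I}"

lemma rank_dist_eq_Fq_rank: "rank_dist q n a b = Fq_rank q n (\<lambda>i. a i - b i)"
  by (simp add: rank_dist_def Fq_rank_def)

lemma Fq_rank_finite: "finite {card I | I. I \<subseteq> {..<n} \<and> Fq_lin_indep q v I}"
proof (rule finite_subset)
  show "{card I | I. I \<subseteq> {..<n} \<and> Fq_lin_indep q v I} \<subseteq> {..n}"
    using card_mono[of "{..<n}"] by fastforce
qed simp

lemma card_le_Fq_rank: "I \<subseteq> {..<n} \<Longrightarrow> Fq_lin_indep q v I \<Longrightarrow> card I \<le> Fq_rank q n v"
  unfolding Fq_rank_def by (intro Max_ge[OF Fq_rank_finite] CollectI exI[of _ I]) simp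

lemma Fq_rank_witness:
  obtains I where "I \<subseteq> {..<n}" "Fq_lin_indep q v I" "card I = Fq_rank q n v"
proof -
  have "card {} \<in> {card I | I. I \<subseteq> {..<n} \<and> Fq_lin_indep q v I}"
    by (intro CollectI exI[of _ "{}"]) (simp add: Fq_lin_indep_def)
  hence "Fq_rank q n v \<in> {card I | I. I \<subseteq> {..<n} \<and> Fq_lin_indep q v I}"
    unfolding Fq_rank_def by (intro Max_in[OF Fq_rank_finite]) auto
  thus ?thesis using that by auto
qed

lemma Fq_lin_indep_reindex:
  assumes h: "bij_betw h {..<t} I" and ind: "Fq_lin_indep q v I"
  shows "Fq_lin_indep q (v \<circ> h) {..<t}"
  unfolding Fq_lin_indep_def
proof (intro allI impI)
  fix c assume c: "(\<forall>i\<in>{..<t}. c i \<in> Fq q) \<and> (\<Sum>i\<in>{..<t}. c i * (v \<circ> h) i) = 0"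
  define c' where "c' = c \<circ> inv_into {..<t} h"
  have c'h: "c' (h s) = c s" if "s < t" for s
    using h that by (simp add: c'_def bij_betw_def inv_into_f_f)
  have "(\<Sum>i\<in>I. c' i * v i) = (\<Sum>s<t. c' (h s) * v (h s))"
    using sum.reindex_bij_betw[OF h, of "\<lambda>i. c' i * v i"] by simp
  also have "\<dots> = (\<Sum>s<t. c s * (v \<circ> h) s)"
    by (intro sum.cong) (auto simp: c'h)
  finally have "(\<Sum>i\<in>I. c' i * v i) = 0" using c by simp
  moreover have "\<forall>i\<in>I. c' i \<in> Fq q"
    using c bij_betwE[OF bij_betw_inv_into[OF h]] by (auto simp: c'_def)
  ultimately have "\<forall>i\<in>I. c' i = 0" using ind unfolding Fq_lin_indep_def by blast
  thus "\<forall>i\<in>{..<t}. c i = 0" using h c'h by (auto simp: bij_betw_def)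
qed

context Fq_extension
begin

lemma dependent_insert_in_span:
  assumes "finite I" "l \<notin> I" "Fq_lin_indep q (v::nat \<Rightarrow> 'a) I" "\<not> Fq_lin_indep q v (insert l I)"
  shows "\<exists>c. (\<forall>i\<in>I. c i \<in> Fq q) \<and> v l = (\<Sum>i\<in>I. c i * v i)"
proof -
  obtain c where c: "\<forall>i\<in>insert l I. c i \<in> Fq q" "(\<Sum>i\<in>insert l I. c i * v i) = 0"
      "\<exists>i\<in>insert l I. c i \<noteq> 0"
    using assms(4) unfolding Fq_lin_indep_def by blast
  have sum: "c l * v l + (\<Sum>i\<in>I. c i * v i) = 0" using c(2) assms(1,2) by simp
  have "c l \<noteq> 0"
  proof
    assume "c l = 0"
    hence "\<forall>i\<in>I. c i = 0" using sum assms(3) c(1) unfolding Fq_lin_indep_def by simp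
    thus False using c(3) \<open>c l = 0\<close> by auto
  qed
  hence "v l = - (\<Sum>i\<in>I. c i * v i) / c l"
    using sum by (simp add: field_simps eq_neg_iff_add_eq_0)
  also have "\<dots> = (\<Sum>i\<in>I. (- (c i / c l)) * v i)"
    by (simp add: sum_divide_distrib flip: sum_negf)
  finally have "v l = (\<Sum>i\<in>I. (- (c i / c l)) * v i)" .
  moreover have "\<forall>i\<in>I. - (c i / c l) \<in> Fq q" using c(1) by (auto intro: Fq_uminus Fq_divide)
  ultimately show ?thesis by (intro exI[of _ "\<lambda>i. - (c i / c l)"]) simp
qed

lemma Fq_rank_le_qdeg:
  assumes "(G::'a poly) \<in> linpolys q" "G \<noteq> 0" and van: "\<And>l. l < n \<Longrightarrow> poly G (v l) = 0"
  shows "Fq_rank q n v \<le> qdeg q G"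
proof -
  obtain I where I: "I \<subseteq> {..<n}" "Fq_lin_indep q v I" "card I = Fq_rank q n v"
    by (rule Fq_rank_witness)
  obtain h where h: "bij_betw h {..<card I} I"
    using ex_bij_betw_nat_finite[of I] finite_subset[OF I(1)] by (auto simp: atLeast0LessThan)
  have "card I \<le> qdeg q G"
  proof (rule indep_roots_le_qdeg[OF assms(1,2) Fq_lin_indep_reindex[OF h I(2)]])
    fix s assume "s < card I"
    thus "poly G ((v \<circ> h) s) = 0" using h I(1) van by (auto simp: bij_betw_def)
  qed
  thus ?thesis using I(3) by simp
qed

text \<open>The annihilator of the \<open>\<bbbF>\<^sub>q\<close>-span of \<open>v\<close>, built from a maximal independent subfamily.\<close>

lemma Fq_rank_annihilator:
  obtains E where "E \<in> linpolys q" "E \<noteq> 0" "qdeg q E = Fq_rank q n (v::nat \<Rightarrow> 'a)"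
    "\<And>l. l < n \<Longrightarrow> poly E (v l) = 0"
proof -
  obtain I where I: "I \<subseteq> {..<n}" "Fq_lin_indep q v I" "card I = Fq_rank q n v"
    by (rule Fq_rank_witness)
  define t where "t = card I"
  have fin: "finite I" using I(1) finite_subset by blast
  obtain h where h: "bij_betw h {..<t} I"
    using ex_bij_betw_nat_finite[OF fin] by (auto simp: atLeast0LessThan t_def)
  have ind: "Fq_lin_indep q (v \<circ> h) {..<t}" by (rule Fq_lin_indep_reindex[OF h I(2)])
  have span: "v l \<in> Fq_span q (v \<circ> h) t" if l: "l < n" for l
  proof (cases "l \<in> I")
    case True
    then obtain s where "s < t" "l = h s" using h by (auto simp: bij_betw_def)
    thus ?thesis using Fq_span_generator[of s t "v \<circ> h"] by simp
  next
    case False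
    have "card (insert l I) = Suc (Fq_rank q n v)" using False fin I(3) by simp
    hence "\<not> Fq_lin_indep q v (insert l I)"
      using card_le_Fq_rank[of "insert l I" n q v] I(1) l by auto
    then obtain c where c: "\<forall>i\<in>I. c i \<in> Fq q" "v l = (\<Sum>i\<in>I. c i * v i)"
      using dependent_insert_in_span[OF fin False I(2)] by blast
    have "v l = (\<Sum>s<t. c (h s) * (v \<circ> h) s)"
      using c(2) sum.reindex_bij_betw[OF h, of "\<lambda>i. c i * v i"] by simp
    moreover have "\<forall>s<t. c (h s) \<in> Fq q" using c(1) h by (auto simp: bij_betw_def)
    ultimately show ?thesis
      unfolding mem_Fq_span_iff by (intro exI[of _ "c \<circ> h"]) simp
  qed
  show ?thesis
  proof (rule that)
    show "ann_poly q (v \<circ> h) t \<in> linpolys q" by (rule ann_poly_linpolys[OF ind])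
    show "ann_poly q (v \<circ> h) t \<noteq> 0" by (rule ann_poly_nonzero)
    show "qdeg q (ann_poly q (v \<circ> h) t) = Fq_rank q n v"
      using qdeg_ann_poly[OF ind] I(3) by (simp add: t_def)
    show "poly (ann_poly q (v \<circ> h) t) (v l) = 0" if "l < n" for l
      using span[OF that] by (simp add: poly_ann_poly_eq_0_iff)
  qed
qed

end

section \<open>The interpolation module\<close>

context Fq_extension
begin

lemma mem_interp_module_iff:
  "f \<in> interp_module q n (g::nat \<Rightarrow> 'a) r \<longleftrightarrow>
     snd f \<in> linpolys q \<and>
     (\<exists>P\<in>linpolys q. fst f = P \<circ>\<^sub>p ann_poly q g n - snd f \<circ>\<^sub>p lagrange_poly q n g r)"
proof
  assume "f \<in> interp_module q n g r"
  then obtain \<beta> \<gamma> where bg: "\<beta> \<in> linpolys q" "\<gamma> \<in> linpolys q"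
    "f = padd (lcomp \<beta> (ann_poly q g n, 0)) (lcomp \<gamma> (- lagrange_poly q n g r, [:0, 1:]))"
    unfolding interp_module_def by blast
  hence "f = (\<beta> \<circ>\<^sub>p ann_poly q g n - \<gamma> \<circ>\<^sub>p lagrange_poly q n g r, \<gamma>)"
    by (simp add: lcomp_def padd_def pcompose_linpolys_0 pcompose_linpolys_uminus)
  thus "snd f \<in> linpolys q \<and> (\<exists>P\<in>linpolys q. fst f = P \<circ>\<^sub>p ann_poly q g n - snd f \<circ>\<^sub>p lagrange_poly q n g r)"
    using bg by auto
next
  assume "snd f \<in> linpolys q \<and> (\<exists>P\<in>linpolys q. fst f = P \<circ>\<^sub>p ann_poly q g n - snd f \<circ>\<^sub>p lagrange_poly q n g r)"
  then obtain P where P: "P \<in> linpolys q" "snd f \<in> linpolys q"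
    "fst f = P \<circ>\<^sub>p ann_poly q g n - snd f \<circ>\<^sub>p lagrange_poly q n g r" by blast
  hence "f = padd (lcomp P (ann_poly q g n, 0)) (lcomp (snd f) (- lagrange_poly q n g r, [:0, 1:]))"
    by (simp add: lcomp_def padd_def pcompose_linpolys_0 pcompose_linpolys_uminus prod_eq_iff)
  thus "f \<in> interp_module q n g r"
    unfolding interp_module_def using P by blast
qed

lemma interp_module_lcomp:
  assumes f: "f \<in> interp_module q n (g::nat \<Rightarrow> 'a) r" and \<beta>: "\<beta> \<in> linpolys q"
  shows "lcomp \<beta> f \<in> interp_module q n g r"
proof -
  obtain P where P: "P \<in> linpolys q" "snd f \<in> linpolys q"
    "fst f = P \<circ>\<^sub>p ann_poly q g n - snd f \<circ>\<^sub>p lagrange_poly q n g r"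
    using f unfolding mem_interp_module_iff by blast
  have "fst (lcomp \<beta> f) = (\<beta> \<circ>\<^sub>p P) \<circ>\<^sub>p ann_poly q g n - snd (lcomp \<beta> f) \<circ>\<^sub>p lagrange_poly q n g r"
    by (simp add: lcomp_def P(3) pcompose_linpolys_diff[OF \<beta>] pcompose_assoc)
  thus ?thesis
    unfolding mem_interp_module_iff using \<beta> P by (auto simp: lcomp_def intro: linpolys_pcompose)
qed

lemma interp_module_padd:
  assumes "f \<in> interp_module q n (g::nat \<Rightarrow> 'a) r" "h \<in> interp_module q n g r"
  shows "padd f h \<in> interp_module q n g r"
proof -
  obtain P P' where P: "P \<in> linpolys q" "snd f \<in> linpolys q"
      "fst f = P \<circ>\<^sub>p ann_poly q g n - snd f \<circ>\<^sub>p lagrange_poly q n g r"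
    and P': "P' \<in> linpolys q" "snd h \<in> linpolys q"
      "fst h = P' \<circ>\<^sub>p ann_poly q g n - snd h \<circ>\<^sub>p lagrange_poly q n g r"
    using assms unfolding mem_interp_module_iff by blast
  have "fst (padd f h) = (P + P') \<circ>\<^sub>p ann_poly q g n - snd (padd f h) \<circ>\<^sub>p lagrange_poly q n g r"
    by (simp add: padd_def P(3) P'(3) pcompose_add)
  thus ?thesis
    unfolding mem_interp_module_iff using P P' by (auto simp: padd_def intro: linpolys_add)
qed

lemma interp_module_linpolys:
  assumes "Fq_lin_indep q (g::nat \<Rightarrow> 'a) {..<n}" "f \<in> interp_module q n g r"
  shows "fst f \<in> linpolys q" "snd f \<in> linpolys q"
  using assms ann_poly_linpolys lagrange_poly_linpolys
  by (auto simp: mem_interp_module_iff intro!: linpolys_diff linpolys_pcompose)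

text \<open>On the points \<open>g\<^sub>l\<close> the second relation reads \<open>f\<^sub>1(g\<^sub>l) = - f\<^sub>2(r\<^sub>l)\<close>, since \<open>\<Pi>(g\<^sub>l) = 0\<close>
  and \<open>\<Lambda>(g\<^sub>l) = r\<^sub>l\<close>.\<close>

lemma interp_module_error_roots:
  assumes ind: "Fq_lin_indep q (g::nat \<Rightarrow> 'a) {..<n}" and f: "f \<in> interp_module q n g r"
    and eq: "fst f = - (snd f \<circ>\<^sub>p mp)" and l: "l < n"
  shows "poly (snd f) (poly mp (g l) - r l) = 0"
proof -
  obtain P where P: "P \<in> linpolys q" "snd f \<in> linpolys q"
    "fst f = P \<circ>\<^sub>p ann_poly q g n - snd f \<circ>\<^sub>p lagrange_poly q n g r"
    using f unfolding mem_interp_module_iff by blast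
  have "poly (ann_poly q g n) (g l) = 0"
    unfolding poly_ann_poly_eq_0_iff by (rule Fq_span_generator[OF l])
  hence "poly (fst f) (g l) = - poly (snd f) (r l)"
    unfolding P(3) using poly_lagrange_poly[OF ind l] poly_linpolys_0[OF P(1)] by (simp add: poly_pcompose)
  moreover have "poly (fst f) (g l) = - poly (snd f) (poly mp (g l))"
    unfolding eq by (simp add: poly_pcompose)
  ultimately show ?thesis by (simp add: poly_linpolys_diff[OF P(2)])
qed

text \<open>Conversely, an annihilator \<open>E\<close> of the error of a message \<open>mp\<close> gives \<open>(-E \<circ> mp, E)\<close> in the module:
  \<open>E \<circ> (\<Lambda> - mp)\<close> vanishes on all \<open>g\<^sub>l\<close>, hence is right divisible by \<open>\<Pi>\<close>.\<close>

lemma annihilator_mem_interp_module: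
  assumes ind: "Fq_lin_indep q (g::nat \<Rightarrow> 'a) {..<n}" and E: "E \<in> linpolys q"
    and mp: "mp \<in> linpolys q" and van: "\<And>l. l < n \<Longrightarrow> poly E (poly mp (g l) - r l) = 0"
  shows "(- (E \<circ>\<^sub>p mp), E) \<in> interp_module q n g r"
proof -
  define L where "L = E \<circ>\<^sub>p (lagrange_poly q n g r - mp)"
  have "L \<in> linpolys q"
    unfolding L_def using E mp lagrange_poly_linpolys by (intro linpolys_pcompose linpolys_diff)
  moreover have "poly L (g l) = 0" if l: "l < n" for l
  proof -
    have "poly L (g l) = poly E (- (poly mp (g l) - r l))"
      unfolding L_def using poly_lagrange_poly[OF ind l] by (simp add: poly_pcompose)
    thus ?thesis unfolding poly_linpolys_uminus[OF E] van[OF l] by simp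
  qed
  ultimately obtain \<beta> where \<beta>: "\<beta> \<in> linpolys q" "\<beta> \<circ>\<^sub>p ann_poly q g n = L"
    using ann_poly_right_dvd[OF ind] by metis
  have "- (E \<circ>\<^sub>p mp) = \<beta> \<circ>\<^sub>p ann_poly q g n - E \<circ>\<^sub>p lagrange_poly q n g r"
    by (simp add: \<beta>(2) L_def pcompose_linpolys_diff[OF E])
  thus ?thesis
    unfolding mem_interp_module_iff using E \<beta>(1) by auto
qed

text \<open>The leading terms cannot cancel, so the degrees of the combination are determined by those of
  \<open>\<beta>\<close> and \<open>\<gamma>\<close>.\<close>

lemma predictable_degree:
  assumes lin: "u1 \<in> linpolys q" "v1 \<in> linpolys q" "u2 \<in> linpolys q" "v2 \<in> linpolys q"
      "\<beta> \<in> linpolys q" "(\<gamma>::'a poly) \<in> linpolys q"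
    and nz: "v2 \<noteq> 0" "\<gamma> \<noteq> 0"
    and v1: "v1 = 0 \<or> qdeg q v1 + K < qdeg q u1"
    and u2: "u2 = 0 \<or> qdeg q u2 \<le> qdeg q v2 + K"
    and \<beta>: "\<beta> = 0 \<or> qdeg q \<beta> + qdeg q u1 \<le> qdeg q v2 + K + qdeg q \<gamma>"
  shows "\<beta> \<circ>\<^sub>p v1 + \<gamma> \<circ>\<^sub>p v2 \<noteq> 0 \<and> qdeg q (\<beta> \<circ>\<^sub>p v1 + \<gamma> \<circ>\<^sub>p v2) = qdeg q v2 + qdeg q \<gamma>"
    and "\<beta> \<circ>\<^sub>p u1 + \<gamma> \<circ>\<^sub>p u2 = 0 \<or> qdeg q (\<beta> \<circ>\<^sub>p u1 + \<gamma> \<circ>\<^sub>p u2) \<le> qdeg q v2 + qdeg q \<gamma> + K"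
proof -
  let ?d = "qdeg q \<gamma> + qdeg q v2"
  have "degree (\<gamma> \<circ>\<^sub>p v2) = q ^ ?d"
    using lin nz by (intro degree_pcompose_linpolys) auto
  moreover have "degree (\<beta> \<circ>\<^sub>p v1) < q ^ ?d"
    using lin v1 \<beta> by (intro degree_pcompose_less_q_pow) auto
  ultimately have "degree (\<beta> \<circ>\<^sub>p v1 + \<gamma> \<circ>\<^sub>p v2) = q ^ ?d"
    by (simp add: degree_add_eq_right)
  thus "\<beta> \<circ>\<^sub>p v1 + \<gamma> \<circ>\<^sub>p v2 \<noteq> 0 \<and> qdeg q (\<beta> \<circ>\<^sub>p v1 + \<gamma> \<circ>\<^sub>p v2) = qdeg q v2 + qdeg q \<gamma>"
    using q_pow_pos[of ?d] qdeg_eqI by fastforce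
  have "degree (\<beta> \<circ>\<^sub>p u1) \<le> q ^ (?d + K)"
    using lin \<beta> by (intro degree_pcompose_le_q_pow) auto
  moreover have "degree (\<gamma> \<circ>\<^sub>p u2) \<le> q ^ (?d + K)"
    using lin u2 by (intro degree_pcompose_le_q_pow) auto
  ultimately have "degree (\<beta> \<circ>\<^sub>p u1 + \<gamma> \<circ>\<^sub>p u2) \<le> q ^ (?d + K)"
    by (rule degree_add_le)
  thus "\<beta> \<circ>\<^sub>p u1 + \<gamma> \<circ>\<^sub>p u2 = 0 \<or> qdeg q (\<beta> \<circ>\<^sub>p u1 + \<gamma> \<circ>\<^sub>p u2) \<le> qdeg q v2 + qdeg q \<gamma> + K"
    using lin by (subst (asm) degree_le_q_pow_iff) (auto intro: linpolys_add linpolys_pcompose)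
qed

lemma predictable_degree_converse:
  assumes lin: "u1 \<in> linpolys q" "v1 \<in> linpolys q" "u2 \<in> linpolys q" "v2 \<in> linpolys q"
      "\<beta> \<in> linpolys q" "(\<gamma>::'a poly) \<in> linpolys q"
    and nz: "u1 \<noteq> 0" "v2 \<noteq> 0"
    and v1: "v1 = 0 \<or> qdeg q v1 + K < qdeg q u1"
    and u2: "u2 = 0 \<or> qdeg q u2 \<le> qdeg q v2 + K"
    and snd_nz: "\<beta> \<circ>\<^sub>p v1 + \<gamma> \<circ>\<^sub>p v2 \<noteq> 0"
    and fst_le: "\<beta> \<circ>\<^sub>p u1 + \<gamma> \<circ>\<^sub>p u2 = 0 \<or>
      qdeg q (\<beta> \<circ>\<^sub>p u1 + \<gamma> \<circ>\<^sub>p u2) \<le> qdeg q (\<beta> \<circ>\<^sub>p v1 + \<gamma> \<circ>\<^sub>p v2) + K"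
  shows "\<gamma> \<noteq> 0" and "\<beta> = 0 \<or> qdeg q \<beta> + qdeg q u1 \<le> qdeg q v2 + K + qdeg q \<gamma>"
proof -
  show "\<gamma> \<noteq> 0"
  proof
    assume "\<gamma> = 0"
    hence "\<beta> \<noteq> 0" "v1 \<noteq> 0" using snd_nz pcompose_linpolys_0[OF lin(5)] by auto
    hence "qdeg q \<beta> + qdeg q u1 \<le> qdeg q \<beta> + qdeg q v1 + K"
      using fst_le \<open>\<gamma> = 0\<close> lin nz pcompose_linpolys_nonzero[OF lin(5) lin(1)] by (simp add: qdeg_pcompose)
    thus False using v1 \<open>v1 \<noteq> 0\<close> by simp
  qed
  show "\<beta> = 0 \<or> qdeg q \<beta> + qdeg q u1 \<le> qdeg q v2 + K + qdeg q \<gamma>"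
  proof (rule ccontr)
    assume "\<not> ?thesis"
    hence "\<beta> \<noteq> 0" and big: "qdeg q v2 + K + qdeg q \<gamma> < qdeg q \<beta> + qdeg q u1" by auto
    define X where "X = qdeg q \<beta> + qdeg q u1"
    have "degree (\<beta> \<circ>\<^sub>p u1) = q ^ X"
      unfolding X_def using lin \<open>\<beta> \<noteq> 0\<close> nz by (intro degree_pcompose_linpolys) auto
    moreover have "degree (\<gamma> \<circ>\<^sub>p u2) < q ^ X"
      using lin u2 big unfolding X_def by (intro degree_pcompose_less_q_pow) auto
    ultimately have "degree (\<beta> \<circ>\<^sub>p u1 + \<gamma> \<circ>\<^sub>p u2) = q ^ X"
      by (simp add: degree_add_eq_left)
    hence "\<beta> \<circ>\<^sub>p u1 + \<gamma> \<circ>\<^sub>p u2 \<noteq> 0" "qdeg q (\<beta> \<circ>\<^sub>p u1 + \<gamma> \<circ>\<^sub>p u2) = X"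
      using q_pow_pos[of X] qdeg_eqI by fastforce+
    hence "X \<le> qdeg q (\<beta> \<circ>\<^sub>p v1 + \<gamma> \<circ>\<^sub>p v2) + K" using fst_le by simp
    moreover have "degree (\<beta> \<circ>\<^sub>p v1) < q ^ (X - K)"
      using lin v1 unfolding X_def by (intro degree_pcompose_less_q_pow) auto
    moreover have "degree (\<gamma> \<circ>\<^sub>p v2) < q ^ (X - K)"
      using lin big unfolding X_def by (intro degree_pcompose_less_q_pow) auto
    ultimately have "degree (\<beta> \<circ>\<^sub>p v1 + \<gamma> \<circ>\<^sub>p v2) < q ^ (X - K)"
      using degree_add_le_max[of "\<beta> \<circ>\<^sub>p v1" "\<gamma> \<circ>\<^sub>p v2"] by simp
    hence "qdeg q (\<beta> \<circ>\<^sub>p v1 + \<gamma> \<circ>\<^sub>p v2) < X - K"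
      using snd_nz lin by (subst (asm) degree_less_q_pow_iff) (auto intro: linpolys_add linpolys_pcompose)
    thus False using \<open>X \<le> qdeg q (\<beta> \<circ>\<^sub>p v1 + \<gamma> \<circ>\<^sub>p v2) + K\<close> big unfolding X_def by linarith
  qed
qed

end

section \<open>Correctness of the decoder\<close>

locale interp_basis = Fq_extension q e m field_type for q e m and field_type :: "'a::{field,finite} itself" +
  fixes k n :: nat and g r :: "nat \<Rightarrow> 'a" and b1 b2 :: "'a poly \<times> 'a poly"
  assumes k_pos: "1 \<le> k" and indep: "Fq_lin_indep q g {..<n}"
    and basis: "is_basis q (interp_module q n g r) {b1, b2}"
    and lpos_b1: "lpos q k b1 = 1" and lpos_b2: "lpos q k b2 = 2"
begin

lemma basis_in_module: "b1 \<in> interp_module q n g r" "b2 \<in> interp_module q n g r"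
  using basis by (auto simp: is_basis_def)

lemma basis_linpolys: "fst b1 \<in> linpolys q" "snd b1 \<in> linpolys q" "fst b2 \<in> linpolys q" "snd b2 \<in> linpolys q"
  using interp_module_linpolys[OF indep basis_in_module(1)] interp_module_linpolys[OF indep basis_in_module(2)]
  by auto

lemma lcomb_basis: "lcomb {b1, b2} a = padd (lcomp (a b1) b1) (lcomp (a b2) b2)"
proof -
  have "b1 \<noteq> b2" using lpos_b1 lpos_b2 by auto
  thus ?thesis by (simp add: lcomb_def padd_def)
qed

lemma basis_nonzero: "b \<in> {b1, b2} \<Longrightarrow> b \<noteq> (0, 0)"
proof
  assume b: "b \<in> {b1, b2}" "b = (0, 0)"
  define a where "a = (\<lambda>h. if h = b then [:0, 1::'a:] else 0)"
  have "lcomb {b1, b2} a = (0, 0)"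
    using b by (auto simp: lcomb_basis a_def lcomp_def padd_def pcompose_X_left)
  moreover have "\<forall>h\<in>{b1, b2}. a h \<in> linpolys q"
    by (simp add: a_def linpolys_X)
  ultimately have "a b = 0" using basis b(1) unfolding is_basis_def by blast
  thus False by (simp add: a_def)
qed

lemma b1_leading: "fst b1 \<noteq> 0 \<and> (snd b1 = 0 \<or> qdeg q (snd b1) + (k - 1) < qdeg q (fst b1))"
  using lpos_eq_1D[of "fst b1" "snd b1" k] basis_linpolys basis_nonzero lpos_b1 by simp

lemma b2_leading: "snd b2 \<noteq> 0 \<and> (fst b2 = 0 \<or> qdeg q (fst b2) \<le> qdeg q (snd b2) + (k - 1))"
  using lpos_eq_2D[of "fst b2" "snd b2" k] basis_linpolys basis_nonzero lpos_b2 by simp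

lemma wqdeg_bound_iff:
  "int (qdeg q \<beta>) \<le> wqdeg q k b2 - wqdeg q k b1 + int j \<longleftrightarrow>
   qdeg q \<beta> + qdeg q (fst b1) \<le> qdeg q (snd b2) + (k - 1) + j"
  using b1_leading b2_leading k_pos by (auto simp: wqdeg_def)

lemma basis_decomposition:
  assumes "f \<in> interp_module q n g r"
  obtains \<beta> \<gamma> where "\<beta> \<in> linpolys q" "\<gamma> \<in> linpolys q"
    "f = (\<beta> \<circ>\<^sub>p fst b1 + \<gamma> \<circ>\<^sub>p fst b2, \<beta> \<circ>\<^sub>p snd b1 + \<gamma> \<circ>\<^sub>p snd b2)"
proof -
  obtain a where "\<forall>h\<in>{b1, b2}. a h \<in> linpolys q" "f = lcomb {b1, b2} a"
    using basis assms unfolding is_basis_def by blast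
  thus ?thesis using that[of "a b1" "a b2"] by (simp add: lcomb_basis lcomp_def padd_def)
qed

text \<open>The second component of the combination annihilates the error of the candidate.\<close>

lemma alg_candidates_close:
  assumes "mp \<in> alg_candidates q k b1 b2 j"
  shows "mp \<in> gabidulin_msgs q k \<and> rank_dist q n (codeword g mp) r \<le> qdeg q (snd b2) + j"
proof -
  obtain \<beta> \<gamma> where mp: "mp \<in> linpolys q" and \<beta>: "\<beta> \<in> linpolys q"
      "\<beta> = 0 \<or> int (qdeg q \<beta>) \<le> wqdeg q k b2 - wqdeg q k b1 + int j"
    and \<gamma>: "\<gamma> \<in> linpolys q" "\<gamma> \<noteq> 0" "qdeg q \<gamma> = j"
    and eq: "fst (padd (lcomp \<beta> b1) (lcomp \<gamma> b2)) = - (snd (padd (lcomp \<beta> b1) (lcomp \<gamma> b2)) \<circ>\<^sub>p mp)"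
    using assms unfolding alg_candidates_def Let_def by blast
  define f where "f = padd (lcomp \<beta> b1) (lcomp \<gamma> b2)"
  have f: "f = (\<beta> \<circ>\<^sub>p fst b1 + \<gamma> \<circ>\<^sub>p fst b2, \<beta> \<circ>\<^sub>p snd b1 + \<gamma> \<circ>\<^sub>p snd b2)"
    by (simp add: f_def lcomp_def padd_def)
  have deg: "snd f \<noteq> 0 \<and> qdeg q (snd f) = qdeg q (snd b2) + j"
      "fst f = 0 \<or> qdeg q (fst f) \<le> qdeg q (snd b2) + j + (k - 1)"
    using predictable_degree[OF basis_linpolys \<beta>(1) \<gamma>(1) _ \<gamma>(2), of "k - 1"]
      b1_leading b2_leading \<beta>(2) \<gamma>(3) wqdeg_bound_iff f by auto
  have "f \<in> interp_module q n g r"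
    unfolding f_def using basis_in_module \<beta>(1) \<gamma>(1) by (intro interp_module_padd interp_module_lcomp)
  hence snd_lin: "snd f \<in> linpolys q" and roots: "\<And>l. l < n \<Longrightarrow> poly (snd f) (poly mp (g l) - r l) = 0"
    using interp_module_linpolys[OF indep] interp_module_error_roots[OF indep _ eq[folded f_def]] by auto
  have "mp = 0 \<or> qdeg q mp < k"
  proof (cases "mp = 0")
    case False
    hence "qdeg q (fst f) = qdeg q (snd f) + qdeg q mp" "fst f \<noteq> 0"
      using eq[folded f_def] snd_lin mp deg(1) pcompose_linpolys_nonzero by (auto simp: qdeg_pcompose)
    thus ?thesis using deg k_pos by linarith
  qed simp
  moreover have "rank_dist q n (codeword g mp) r \<le> qdeg q (snd f)"
    unfolding rank_dist_eq_Fq_rank codeword_def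
    by (intro Fq_rank_le_qdeg[OF snd_lin]) (use deg(1) roots in auto)
  ultimately show ?thesis using mp deg(1) by (simp add: gabidulin_msgs_def)
qed

lemma alg_candidatesI:
  assumes mp: "mp \<in> linpolys q" and lin: "\<beta> \<in> linpolys q" "\<gamma> \<in> linpolys q" and "\<gamma> \<noteq> 0"
    and bound: "\<beta> = 0 \<or> qdeg q \<beta> + qdeg q (fst b1) \<le> qdeg q (snd b2) + (k - 1) + qdeg q \<gamma>"
    and eq: "\<beta> \<circ>\<^sub>p fst b1 + \<gamma> \<circ>\<^sub>p fst b2 = - ((\<beta> \<circ>\<^sub>p snd b1 + \<gamma> \<circ>\<^sub>p snd b2) \<circ>\<^sub>p mp)"
  shows "mp \<in> alg_candidates q k b1 b2 (qdeg q \<gamma>)"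
proof -
  define c where "c = inverse (lead_coeff \<gamma>)"
  have "c \<noteq> 0" using \<open>\<gamma> \<noteq> 0\<close> by (simp add: c_def)
  have "smult c \<beta> \<in> linpolys q" "smult c \<gamma> \<in> linpolys q" "smult c \<gamma> \<noteq> 0" "lead_coeff (smult c \<gamma>) = 1"
    using lin \<open>\<gamma> \<noteq> 0\<close> \<open>c \<noteq> 0\<close> by (auto simp: linpolys_smult c_def)
  moreover have "smult c \<beta> = 0 \<or> int (qdeg q (smult c \<beta>)) \<le> wqdeg q k b2 - wqdeg q k b1 + int (qdeg q \<gamma>)"
    using bound \<open>c \<noteq> 0\<close> by (simp add: wqdeg_bound_iff)
  moreover have "fst (padd (lcomp (smult c \<beta>) b1) (lcomp (smult c \<gamma>) b2)) =
      - (snd (padd (lcomp (smult c \<beta>) b1) (lcomp (smult c \<gamma>) b2)) \<circ>\<^sub>p mp)"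
    using arg_cong[OF eq, of "smult c"] by (simp add: lcomp_def padd_def pcompose_smult pcompose_add smult_add_right smult_diff_right)
  ultimately show ?thesis
    unfolding alg_candidates_def Let_def using mp \<open>c \<noteq> 0\<close> by (intro CollectI conjI exI) auto
qed

text \<open>Write \<open>(-E \<circ> mp, E)\<close>, for the annihilator \<open>E\<close> of the error, in the basis; the predictable
  degrees make the coefficient of \<open>b\<^sub>2\<close> nonzero of \<open>q\<close>-degree \<open>d - qdeg (snd b\<^sub>2)\<close>.\<close>

lemma message_in_alg_candidates:
  assumes "mp \<in> gabidulin_msgs q k"
  defines "d \<equiv> rank_dist q n (codeword g mp) r"
  shows "qdeg q (snd b2) \<le> d \<and> mp \<in> alg_candidates q k b1 b2 (d - qdeg q (snd b2))"
proof -
  have mp: "mp \<in> linpolys q" "mp = 0 \<or> qdeg q mp < k"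
    using assms by (auto simp: gabidulin_msgs_def)
  obtain E where E: "E \<in> linpolys q" "E \<noteq> 0" "qdeg q E = d"
      "\<And>l. l < n \<Longrightarrow> poly E (poly mp (g l) - r l) = 0"
    using Fq_rank_annihilator[of n "\<lambda>l. poly mp (g l) - r l"]
    unfolding d_def rank_dist_eq_Fq_rank codeword_def by blast
  obtain \<beta> \<gamma> where lin: "\<beta> \<in> linpolys q" "\<gamma> \<in> linpolys q"
    and "(- (E \<circ>\<^sub>p mp), E) = (\<beta> \<circ>\<^sub>p fst b1 + \<gamma> \<circ>\<^sub>p fst b2, \<beta> \<circ>\<^sub>p snd b1 + \<gamma> \<circ>\<^sub>p snd b2)"
    by (rule basis_decomposition[OF annihilator_mem_interp_module[OF indep E(1) mp(1) E(4)]])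
  hence comb: "- (E \<circ>\<^sub>p mp) = \<beta> \<circ>\<^sub>p fst b1 + \<gamma> \<circ>\<^sub>p fst b2" "E = \<beta> \<circ>\<^sub>p snd b1 + \<gamma> \<circ>\<^sub>p snd b2"
    unfolding prod.inject by blast+
  have "E \<circ>\<^sub>p mp = 0 \<or> qdeg q (E \<circ>\<^sub>p mp) \<le> qdeg q E + (k - 1)"
  proof (cases "mp = 0")
    case False
    hence "qdeg q (E \<circ>\<^sub>p mp) = qdeg q E + qdeg q mp" using mp(1) E(1,2) by (simp add: qdeg_pcompose)
    thus ?thesis using mp(2) False by (intro disjI2) linarith
  qed (simp add: pcompose_linpolys_0[OF E(1)])
  hence fst_le: "\<beta> \<circ>\<^sub>p fst b1 + \<gamma> \<circ>\<^sub>p fst b2 = 0 \<or>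
      qdeg q (\<beta> \<circ>\<^sub>p fst b1 + \<gamma> \<circ>\<^sub>p fst b2) \<le> qdeg q (\<beta> \<circ>\<^sub>p snd b1 + \<gamma> \<circ>\<^sub>p snd b2) + (k - 1)"
    unfolding comb(1)[symmetric] comb(2)[symmetric] by auto
  note conv = predictable_degree_converse[OF basis_linpolys lin, of "k - 1"]
  have "\<gamma> \<noteq> 0" and bound: "\<beta> = 0 \<or> qdeg q \<beta> + qdeg q (fst b1) \<le> qdeg q (snd b2) + (k - 1) + qdeg q \<gamma>"
    using conv b1_leading b2_leading E(2) comb(2) fst_le by auto
  hence "d = qdeg q (snd b2) + qdeg q \<gamma>"
    using predictable_degree(1)[OF basis_linpolys lin] b1_leading b2_leading E(3) comb(2) by auto
  moreover have "mp \<in> alg_candidates q k b1 b2 (qdeg q \<gamma>)"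
    using alg_candidatesI[OF mp(1) lin \<open>\<gamma> \<noteq> 0\<close> bound] by (simp add: comb(1)[symmetric] comb(2)[symmetric])
  ultimately show ?thesis by simp
qed

theorem algorithm1_output_closest:
  "(\<exists>j. alg_candidates q k b1 b2 j \<noteq> {}) \<and>
   algorithm1_output q k b1 b2 =
     {mp \<in> gabidulin_msgs q k. \<forall>mp' \<in> gabidulin_msgs q k.
        rank_dist q n (codeword g mp) r \<le> rank_dist q n (codeword g mp') r}"
proof -
  let ?d = "\<lambda>mp. rank_dist q n (codeword g mp) r"
  let ?C = "alg_candidates q k b1 b2"
  let ?closest = "{mp \<in> gabidulin_msgs q k. \<forall>mp' \<in> gabidulin_msgs q k. ?d mp \<le> ?d mp'}"
  define d0 where "d0 = (LEAST d. \<exists>mp\<in>gabidulin_msgs q k. ?d mp = d)"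
  have "(0 :: 'a poly) \<in> gabidulin_msgs q k" by (simp add: gabidulin_msgs_def)
  hence "\<exists>d. \<exists>mp\<in>gabidulin_msgs q k. ?d mp = d" by blast
  then obtain m0 where m0: "m0 \<in> gabidulin_msgs q k" "?d m0 = d0"
    using LeastI_ex[of "\<lambda>d. \<exists>mp\<in>gabidulin_msgs q k. ?d mp = d"] unfolding d0_def by blast
  have min: "d0 \<le> ?d mp" if "mp \<in> gabidulin_msgs q k" for mp
    unfolding d0_def using that by (intro Least_le) blast
  define j0 where "j0 = d0 - qdeg q (snd b2)"
  have d0: "d0 = qdeg q (snd b2) + j0" and "m0 \<in> ?C j0"
    using message_in_alg_candidates[OF m0(1)] m0(2) by (auto simp: j0_def)
  have close: "mp \<in> gabidulin_msgs q k \<and> ?d mp \<le> d0 - j0 + j" if "mp \<in> ?C j" for mp j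
    using alg_candidates_close[OF that] d0 by simp
  have "j0 \<le> j" if ne: "?C j \<noteq> {}" for j
  proof -
    obtain mp where "mp \<in> ?C j" using ne by blast
    thus ?thesis using close[of mp j] min[of mp] d0 by simp
  qed
  hence "(LEAST j. ?C j \<noteq> {}) = j0"
    using \<open>m0 \<in> ?C j0\<close> by (intro Least_equality) blast+
  moreover have "?C j0 = ?closest"
  proof (intro equalityI subsetI)
    fix mp assume "mp \<in> ?C j0"
    hence "mp \<in> gabidulin_msgs q k" "?d mp \<le> d0" using close[of mp j0] d0 by auto
    moreover have "?d mp \<le> ?d mp'" if "mp' \<in> gabidulin_msgs q k" for mp'
      using \<open>?d mp \<le> d0\<close> min[OF that] by linarith
    ultimately show "mp \<in> ?closest" by blast
  next
    fix mp assume "mp \<in> ?closest"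
    hence "mp \<in> gabidulin_msgs q k" "?d mp \<le> d0" using m0 by auto
    hence "?d mp = d0" using min by (simp add: antisym)
    thus "mp \<in> ?C j0" using message_in_alg_candidates[OF \<open>mp \<in> gabidulin_msgs q k\<close>] by (simp add: j0_def)
  qed
  ultimately show ?thesis using \<open>m0 \<in> ?C j0\<close> by (auto simp: algorithm1_output_def)
qed

end

theorem theorem23:
  fixes q m k n :: nat and g r :: "nat \<Rightarrow> 'a::{field,finite}"
    and b1 b2 :: "'a poly \<times> 'a poly"
  assumes "\<exists>p e. prime p \<and> 0 < e \<and> q = p ^ e"
    and "1 \<le> m" and "CARD('a) = q ^ m"
    and "1 \<le> k" and "k \<le> n"
    and "Fq_lin_indep q g {..<n}"
    and "minimal_basis q k (interp_module q n g r) {b1, b2}"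
    and "lpos q k b1 = 1" and "lpos q k b2 = 2"
  shows "(\<exists>j. alg_candidates q k b1 b2 j \<noteq> {}) \<and>
         algorithm1_output q k b1 b2 =
           {mp \<in> gabidulin_msgs q k.
              \<forall>mp' \<in> gabidulin_msgs q k.
                rank_dist q n (codeword g mp) r \<le> rank_dist q n (codeword g mp') r}"
proof -
  obtain p e where p: "prime p" "0 < e" "q = p ^ e" using assms(1) by blast
  have "CHAR('a) = p"
    using CHAR_eq_prime_of_CARD[OF p(1)] assms(3) p(3) by (simp flip: power_mult)
  then interpret interp_basis q e m "TYPE('a)" k n g r b1 b2
    using assms p by unfold_locales (auto simp: minimal_basis_def)
  show ?thesis by (rule algorithm1_output_closest)
qed

end
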